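(* Assume $M,K\in\mathbb{R}^{m\times m}$ are symmetric positive definite, $\nu>0$, $\omega\in\mathbb{R}$, and $\alpha>0$. Let $\eta=\sqrt{\nu}/\sqrt{1+\nu\omega^2}$, $\mathcal M=\mathrm{diag}(M,M,M,M)$, $\mathcal K=\eta\,\mathrm{diag}(K,K,K,K)$, $\mathcal G$ as below, and \[ \mathcal T_\alpha=(\alpha I+\mathcal K)^{-1}(\alpha I+\mathcal G\mathcal M)(\alpha I+\mathcal M)^{-1}(\alpha I-\mathcal G\mathcal K). \] Then \[ \rho(\mathcal T_\alpha)\le\gamma(\alpha):=\max_{\mu\in\sigma(M)}\frac{\sqrt{\alpha^2+\mu^2}}{\alpha+\mu}\;\max_{\lambda\in\sigma(K)}\frac{\sqrt{\alpha^2+(\eta\lambda)^2}}{\alpha+\eta\lambda}<1 . \] In particular the ASSS iteration $\mathbf x^{(k+1)}=\mathcal T_\alpha\mathbf x^{(k)}+\mathbf f$ converges for every $\alpha>0$ and every initial guess.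
   Context: $I$ denotes an identity matrix of appropriate size. $\mathcal G=\frac{1}{\sqrt{\nu(1+\nu\omega^2)}}\begin{pmatrix} 0&\omega\nu I&\sqrt{\nu}I&0\\ -\omega\nu I&0&0&\sqrt{\nu}I\\ -\sqrt{\nu}I&0&0&-\omega\nu I\\ 0&-\sqrt{\nu}I&\omega\nu I&0\end{pmatrix}$ with $m\times m$ identity blocks. $\mathrm{diag}(\cdot)$ is block diagonal, $\sigma(\cdot)$ is the spectrum and $\rho(\cdot)$ the spectral radius. The ASSS iteration for $(\mathcal M+\mathcal G\mathcal K)\mathbf x=\mathbf b$ is $(\alpha I+\mathcal M)\mathbf x^{(k+1/2)}=(\alpha I-\mathcal G\mathcal K)\mathbf x^{(k)}+\mathbf b$, $(\alpha I+\mathcal K)\mathbf x^{(k+1)}=(\alpha I+\mathcal G\mathcal M)\mathbf x^{(k+1/2)}-\mathcal G\mathbf b$, which equals $\mathbf x^{(k+1)}=\mathcal T_\alpha\mathbf x^{(k)}+\mathbf f$ with $\mathbf f=\alpha(\alpha I+\mathcal K)^{-1}(I-\mathcal G)(\alpha I+\mathcal M)^{-1}\mathbf b$. *)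

theory Defs
  imports "Jordan_Normal_Form.Spectral_Radius" "Jordan_Normal_Form.Gauss_Jordan_Elimination"
begin

definition sym_pos_def_mat :: "nat \<Rightarrow> real mat \<Rightarrow> bool" where
  "sym_pos_def_mat n A \<longleftrightarrow> A \<in> carrier_mat n n \<and> transpose_mat A = A \<and>
     (\<forall>x \<in> carrier_vec n. x \<noteq> 0\<^sub>v n \<longrightarrow> x \<bullet> (A *\<^sub>v x) > 0)"

definition minv :: "real mat \<Rightarrow> real mat" where
  "minv A = the (mat_inverse A)"

definition G_mat :: "nat \<Rightarrow> real \<Rightarrow> real \<Rightarrow> real mat" where
  "G_mat m \<nu> \<omega> =
    (let I = (1\<^sub>m m :: real mat); Z = (0\<^sub>m m m :: real mat);
         a = \<omega> * \<nu>; s = sqrt \<nu> in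
     (1 / sqrt (\<nu> * (1 + \<nu> * \<omega>^2))) \<cdot>\<^sub>m
       four_block_mat
         (four_block_mat Z (a \<cdot>\<^sub>m I) ((- a) \<cdot>\<^sub>m I) Z)
         (four_block_mat (s \<cdot>\<^sub>m I) Z Z (s \<cdot>\<^sub>m I))
         (four_block_mat ((- s) \<cdot>\<^sub>m I) Z Z ((- s) \<cdot>\<^sub>m I))
         (four_block_mat Z ((- a) \<cdot>\<^sub>m I) (a \<cdot>\<^sub>m I) Z))"

definition asss_iterates :: "real mat \<Rightarrow> real vec \<Rightarrow> real vec \<Rightarrow> nat \<Rightarrow> real vec" where
  "asss_iterates T f x0 k = ((\<lambda>x. T *\<^sub>v x + f) ^^ k) x0"

end

theory Submission
  imports Defs
begin

text \<open>Write \<open>A = \<alpha> I + \<K>\<close>, \<open>B = \<alpha> I + \<G> \<M>\<close>, \<open>C = \<alpha> I + \<M>\<close> and \<open>D = \<alpha> I - \<G> \<K>\<close>, so that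
  \<open>T = A\<^sup>-\<^sup>1 B C\<^sup>-\<^sup>1 D\<close>. The matrix \<open>\<G>\<close> is orthogonal, skew-symmetric and commutes with every
  block-diagonal matrix \<open>\<P> = diag(P, P, P, P)\<close>; for symmetric \<open>P\<close> this makes \<open>\<G> \<P> y\<close> orthogonal
  to \<open>y\<close>, so \<open>|(\<alpha> I \<plusminus> \<G> \<P>) y|\<^sup>2 = \<alpha>\<^sup>2 |y|\<^sup>2 + |\<P> y|\<^sup>2\<close>. If every eigenvalue \<open>\<mu>\<close> of \<open>P\<close>
  satisfies \<open>\<alpha>\<^sup>2 + \<mu>\<^sup>2 \<le> g\<^sup>2 (\<alpha> + \<mu>)\<^sup>2\<close>, the right-hand side is at most \<open>g\<^sup>2 |(\<alpha> I + \<P>) y|\<^sup>2\<close>.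
  Hence \<open>|B u| \<le> \<gamma>\<^sub>M |C u|\<close> and \<open>|D z| \<le> \<gamma>\<^sub>K |A z|\<close>, i.e. \<open>T\<close> contracts the norm \<open>z \<mapsto> |A z|\<close>
  by \<open>\<gamma> = \<gamma>\<^sub>M \<gamma>\<^sub>K < 1\<close>. A contraction in an equivalent norm has spectral radius at most \<open>\<gamma>\<close>,
  and its affine iteration converges geometrically.\<close>

section \<open>Euclidean norm of real vectors\<close>

definition vec_norm :: "real vec \<Rightarrow> real" where
  "vec_norm v = sqrt (v \<bullet> v)"

lemma scalar_prod_self_nonneg: "0 \<le> (v :: real vec) \<bullet> v"
  using conjugate_square_ge_0_vec[of v] by simp

lemma scalar_prod_self_eq_0_iff:
  assumes "(v :: real vec) \<in> carrier_vec n"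
  shows "v \<bullet> v = 0 \<longleftrightarrow> v = 0\<^sub>v n"
  using conjugate_square_eq_0_vec[OF assms] by simp

lemma vec_norm_nonneg: "0 \<le> vec_norm v"
  unfolding vec_norm_def by (simp add: scalar_prod_self_nonneg)

lemma vec_norm_power2: "vec_norm v ^ 2 = v \<bullet> v"
  unfolding vec_norm_def by (simp add: scalar_prod_self_nonneg)

lemma abs_index_le_vec_norm:
  assumes "i < dim_vec v"
  shows "\<bar>v $ i\<bar> \<le> vec_norm v"
proof -
  have "(v $ i)^2 = (\<Sum>j\<in>{i}. v $ j * v $ j)" by (simp add: power2_eq_square)
  also have "\<dots> \<le> v \<bullet> v"
    unfolding scalar_prod_def by (rule sum_mono2) (use assms in auto)
  finally show ?thesis
    unfolding vec_norm_def by (metis real_sqrt_abs real_sqrt_le_mono)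
qed

lemma cauchy_schwarz_scalar_prod:
  assumes x: "(x :: real vec) \<in> carrier_vec n" and y: "y \<in> carrier_vec n"
  shows "(x \<bullet> y)^2 \<le> (x \<bullet> x) * (y \<bullet> y)"
proof (cases "y \<bullet> y = 0")
  case True
  then show ?thesis using x y by (simp add: scalar_prod_self_eq_0_iff)
next
  case False
  then have yy: "y \<bullet> y > 0" using scalar_prod_self_nonneg[of y] by auto
  define t where "t = (x \<bullet> y) / (y \<bullet> y)"
  have "0 \<le> (x - t \<cdot>\<^sub>v y) \<bullet> (x - t \<cdot>\<^sub>v y)" by (rule scalar_prod_self_nonneg)
  also have "\<dots> = x \<bullet> x - 2 * t * (x \<bullet> y) + t^2 * (y \<bullet> y)"
    using x y by (simp add: minus_scalar_prod_distrib scalar_prod_minus_distrib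
        comm_scalar_prod[of y n x] power2_eq_square algebra_simps)
  also have "\<dots> = x \<bullet> x - (x \<bullet> y)^2 / (y \<bullet> y)"
    using yy unfolding t_def by (simp add: field_simps power2_eq_square)
  finally show ?thesis using yy by (simp add: field_simps)
qed

lemma scalar_prod_lincomb_self:
  assumes "(u :: real vec) \<in> carrier_vec n" "v \<in> carrier_vec n"
  shows "(p \<cdot>\<^sub>v u + q \<cdot>\<^sub>v v) \<bullet> (p \<cdot>\<^sub>v u + q \<cdot>\<^sub>v v)
    = p^2 * (u \<bullet> u) + 2 * p * q * (u \<bullet> v) + q^2 * (v \<bullet> v)"
  using assms by (simp add: add_scalar_prod_distrib[of _ n] scalar_prod_add_distrib[of _ n]
      comm_scalar_prod[of v n u] power2_eq_square algebra_simps)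

lemma smult_mat_mult_mat_vec:
  assumes "A \<in> carrier_mat nr nc" "v \<in> carrier_vec nc"
  shows "(c \<cdot>\<^sub>m A) *\<^sub>v v = c \<cdot>\<^sub>v (A *\<^sub>v (v :: 'a :: comm_ring_1 vec))"
  by (rule eq_vecI) (use assms in \<open>auto simp: scalar_prod_def sum_distrib_left ac_simps\<close>)

lemma transpose_smult_mat: "transpose_mat (c \<cdot>\<^sub>m A) = c \<cdot>\<^sub>m transpose_mat A"
  by (rule eq_matI) auto

lemma smult_one_mat: "1 \<cdot>\<^sub>m A = (A :: 'a :: monoid_mult mat)"
  by (rule eq_matI) auto

lemma mult_mat_vec_zero_vec:
  assumes "A \<in> carrier_mat nr nc"
  shows "A *\<^sub>v 0\<^sub>v nc = (0\<^sub>v nr :: 'a :: semiring_0 vec)"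
  by (rule eq_vecI) (use assms in auto)

lemma zero_mat_mult_vec:
  assumes "v \<in> carrier_vec nc"
  shows "0\<^sub>m nr nc *\<^sub>v v = (0\<^sub>v nr :: 'a :: semiring_0 vec)"
  by (rule eq_vecI) (use assms in auto)

lemma add_smult_one_mult_mat_vec:
  assumes "(P :: 'a :: comm_ring_1 mat) \<in> carrier_mat n n" "v \<in> carrier_vec n"
  shows "(c \<cdot>\<^sub>m 1\<^sub>m n + P) *\<^sub>v v = c \<cdot>\<^sub>v v + P *\<^sub>v v"
  using assms by (simp add: add_mult_distrib_mat_vec[of _ n n] smult_mat_mult_mat_vec[of _ n n])

lemma eigenvalue_smult_mat:
  assumes A: "(A :: 'a :: field mat) \<in> carrier_mat n n" and c: "c \<noteq> 0"
    and ev: "eigenvalue (c \<cdot>\<^sub>m A) \<mu>"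
  shows "eigenvalue A (\<mu> / c)"
proof -
  from ev A obtain v where v: "v \<in> carrier_vec n" "v \<noteq> 0\<^sub>v n" "(c \<cdot>\<^sub>m A) *\<^sub>v v = \<mu> \<cdot>\<^sub>v v"
    unfolding eigenvalue_def eigenvector_def by auto
  have "A *\<^sub>v v = (1/c) \<cdot>\<^sub>v ((c \<cdot>\<^sub>m A) *\<^sub>v v)"
    using c A v(1) by (simp add: smult_mat_mult_mat_vec smult_smult_assoc)
  also have "\<dots> = (\<mu> / c) \<cdot>\<^sub>v v" unfolding v(3) by (simp add: smult_smult_assoc)
  finally show ?thesis using A v unfolding eigenvalue_def eigenvector_def by auto
qed

lemma eigenvalue_add_smult_one:
  assumes P: "(P :: 'a :: comm_ring_1 mat) \<in> carrier_mat n n"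
    and ev: "eigenvalue (c \<cdot>\<^sub>m 1\<^sub>m n + P) \<mu>"
  shows "eigenvalue P (\<mu> - c)"
proof -
  from ev P obtain v where v: "v \<in> carrier_vec n" "v \<noteq> 0\<^sub>v n" "c \<cdot>\<^sub>v v + P *\<^sub>v v = \<mu> \<cdot>\<^sub>v v"
    unfolding eigenvalue_def eigenvector_def by (auto simp: add_smult_one_mult_mat_vec)
  have "P *\<^sub>v v = (\<mu> - c) \<cdot>\<^sub>v v"
  proof (rule eq_vecI)
    fix i assume "i < dim_vec ((\<mu> - c) \<cdot>\<^sub>v v)"
    with v(1) P have "i < n" "(c \<cdot>\<^sub>v v + P *\<^sub>v v) $ i = (\<mu> \<cdot>\<^sub>v v) $ i" using v(3) by auto
    with v(1) P show "(P *\<^sub>v v) $ i = ((\<mu> - c) \<cdot>\<^sub>v v) $ i" by (simp add: algebra_simps)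
  qed (use P v(1) in simp)
  then show ?thesis using P v unfolding eigenvalue_def eigenvector_def by auto
qed

section \<open>Eigenvalues of real matrices\<close>

lemma Re_Im_of_real_mat_mult_vec:
  assumes S: "(S :: real mat) \<in> carrier_mat n n" and v: "v \<in> carrier_vec n"
  shows "map_vec Re (map_mat complex_of_real S *\<^sub>v v) = S *\<^sub>v map_vec Re v"
    and "map_vec Im (map_mat complex_of_real S *\<^sub>v v) = S *\<^sub>v map_vec Im v"
  by (rule eq_vecI; use S v in \<open>auto simp: scalar_prod_def Re_sum Im_sum\<close>)+

lemma real_mat_eigenvector_Re_Im:
  assumes S: "(S :: real mat) \<in> carrier_mat n n"
    and ev: "eigenvector (map_mat complex_of_real S) v z"
  defines "x \<equiv> map_vec Re v" and "y \<equiv> map_vec Im v"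
  shows "S *\<^sub>v x = Re z \<cdot>\<^sub>v x - Im z \<cdot>\<^sub>v y"
    and "S *\<^sub>v y = Im z \<cdot>\<^sub>v x + Re z \<cdot>\<^sub>v y"
    and "0 < x \<bullet> x + y \<bullet> y"
proof -
  from ev S have v: "v \<in> carrier_vec n" "v \<noteq> 0\<^sub>v n" "map_mat complex_of_real S *\<^sub>v v = z \<cdot>\<^sub>v v"
    unfolding eigenvector_def by auto
  have x: "x \<in> carrier_vec n" and y: "y \<in> carrier_vec n" unfolding x_def y_def using v by auto
  show "S *\<^sub>v x = Re z \<cdot>\<^sub>v x - Im z \<cdot>\<^sub>v y" "S *\<^sub>v y = Im z \<cdot>\<^sub>v x + Re z \<cdot>\<^sub>v y"
    unfolding x_def y_def Re_Im_of_real_mat_mult_vec[OF S v(1), symmetric] v(3)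
    by (intro eq_vecI; simp)+
  have "x \<noteq> 0\<^sub>v n \<or> y \<noteq> 0\<^sub>v n"
  proof (rule ccontr)
    assume "\<not> ?thesis"
    then have "Re (v $ i) = 0 \<and> Im (v $ i) = 0" if "i < n" for i
      using that v(1) unfolding x_def y_def by (metis carrier_vecD index_map_vec(1) index_zero_vec(1))
    then have "v = 0\<^sub>v n"
      using v(1) by (intro eq_vecI) (auto simp: complex_eq_iff)
    with v(2) show False ..
  qed
  then show "0 < x \<bullet> x + y \<bullet> y"
    using x y scalar_prod_self_nonneg[of x] scalar_prod_self_nonneg[of y]
    by (auto simp: scalar_prod_self_eq_0_iff add_nonneg_eq_0_iff order_less_le)
qed

lemma symmetric_real_eigenvalue:
  assumes S: "(S :: real mat) \<in> carrier_mat n n" and sym: "transpose_mat S = S"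
    and ev: "eigenvalue (map_mat complex_of_real S) z"
  shows "z = complex_of_real (Re z)" and "eigenvalue S (Re z)"
proof -
  from ev obtain v where v: "eigenvector (map_mat complex_of_real S) v z"
    unfolding eigenvalue_def by auto
  then have vc: "v \<in> carrier_vec n" using S unfolding eigenvector_def by auto
  define x where "x = map_vec Re v"
  define y where "y = map_vec Im v"
  have x: "x \<in> carrier_vec n" and y: "y \<in> carrier_vec n" unfolding x_def y_def using vc by auto
  note Sx = real_mat_eigenvector_Re_Im(1)[OF S v, folded x_def y_def]
  note Sy = real_mat_eigenvector_Re_Im(2)[OF S v, folded x_def y_def]
  note pos = real_mat_eigenvector_Re_Im(3)[OF S v, folded x_def y_def]
  have "(S *\<^sub>v x) \<bullet> y = x \<bullet> (S *\<^sub>v y)"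
    using transpose_vec_mult_scalar[OF S y x] unfolding sym .
  then have "Im z * (x \<bullet> x + y \<bullet> y) = 0"
    unfolding Sx Sy using x y
    by (simp add: minus_scalar_prod_distrib scalar_prod_add_distrib[of x n] comm_scalar_prod[of y n x] algebra_simps)
  with pos have imz: "Im z = 0" by simp
  then show "z = complex_of_real (Re z)" by (simp add: complex_eq_iff)
  have "x \<noteq> 0\<^sub>v n \<or> y \<noteq> 0\<^sub>v n" using pos x y by auto
  moreover have "S *\<^sub>v x = Re z \<cdot>\<^sub>v x" "S *\<^sub>v y = Re z \<cdot>\<^sub>v y" using Sx Sy imz x y by auto
  ultimately show "eigenvalue S (Re z)"
    using S x y unfolding eigenvalue_def eigenvector_def by auto
qed

lemma smult_pow_mat:
  assumes A: "(A :: 'a :: comm_ring_1 mat) \<in> carrier_mat n n"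
  shows "(c \<cdot>\<^sub>m A) ^\<^sub>m k = c^k \<cdot>\<^sub>m (A ^\<^sub>m k)"
proof (induct k)
  case 0
  show ?case by (rule eq_matI) auto
next
  case (Suc k)
  have "(c \<cdot>\<^sub>m A) ^\<^sub>m Suc k = (c^k \<cdot>\<^sub>m (A ^\<^sub>m k)) * (c \<cdot>\<^sub>m A)" using Suc by simp
  also have "\<dots> = c^Suc k \<cdot>\<^sub>m (A ^\<^sub>m Suc k)"
    by (rule eq_matI) (use A in \<open>auto simp: scalar_prod_def sum_distrib_left ac_simps\<close>)
  finally show ?case .
qed

lemma pow_mat_mult_self:
  assumes S: "(S :: 'a :: semiring_1 mat) \<in> carrier_mat n n"
  shows "(S * S) ^\<^sub>m j = S ^\<^sub>m (2 * j)"
proof (induct j)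
  case (Suc j)
  have "S ^\<^sub>m (2 * Suc j) = (S ^\<^sub>m (2 * j) * S) * S" by simp
  also have "\<dots> = S ^\<^sub>m (2 * j) * (S * S)" using S by (auto intro!: assoc_mult_mat)
  finally show ?case using Suc by simp
qed simp

section \<open>Norm bounds for symmetric matrices\<close>

lemma abs_mult_mat_vec_index_le:
  assumes A: "(A :: real mat) \<in> carrier_mat n n"
    and B: "\<And>i j. i < n \<Longrightarrow> j < n \<Longrightarrow> \<bar>A $$ (i,j)\<bar> \<le> B"
    and y: "y \<in> carrier_vec n" and i: "i < n"
  shows "\<bar>(A *\<^sub>v y) $ i\<bar> \<le> B * (\<Sum>j<n. \<bar>y $ j\<bar>)"
proof -
  have "\<bar>(A *\<^sub>v y) $ i\<bar> = \<bar>\<Sum>j<n. A $$ (i,j) * y $ j\<bar>"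
    using A y i by (auto simp: scalar_prod_def lessThan_atLeast0)
  also have "\<dots> \<le> (\<Sum>j<n. \<bar>A $$ (i,j)\<bar> * \<bar>y $ j\<bar>)" by (rule sum_abs[THEN order_trans]) (simp add: abs_mult)
  also have "\<dots> \<le> (\<Sum>j<n. B * \<bar>y $ j\<bar>)" by (rule sum_mono) (auto intro!: mult_right_mono B i)
  finally show ?thesis by (simp add: sum_distrib_left)
qed

lemma symmetric_pow_entries_bound:
  assumes S: "(S :: real mat) \<in> carrier_mat n n" and sym: "transpose_mat S = S" and n: "0 < n"
    and ev: "\<And>\<mu>. eigenvalue S \<mu> \<Longrightarrow> \<bar>\<mu>\<bar> \<le> d" and d: "0 \<le> d" and r: "d < r"
  obtains c where "\<And>k i j. i < n \<Longrightarrow> j < n \<Longrightarrow> \<bar>(S ^\<^sub>m k) $$ (i,j)\<bar> \<le> c * r^k"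
proof -
  have r0: "0 < r" using d r by linarith
  define S' where "S' = map_mat complex_of_real ((1/r) \<cdot>\<^sub>m S)"
  have S': "S' \<in> carrier_mat n n" unfolding S'_def using S by simp
  have "spectral_radius S' < 1"
  proof -
    from spectral_radius_mem_max(1)[OF S' n] obtain z
      where z: "eigenvalue S' z" and rho: "spectral_radius S' = cmod z"
      unfolding spectrum_def by auto
    have sym': "transpose_mat ((1/r) \<cdot>\<^sub>m S) = (1/r) \<cdot>\<^sub>m S"
      using sym by (simp add: transpose_smult_mat)
    from symmetric_real_eigenvalue[OF smult_carrier_mat[OF S] sym' z[unfolded S'_def]]
    have zr: "z = complex_of_real (Re z)" and ev': "eigenvalue ((1/r) \<cdot>\<^sub>m S) (Re z)" by auto
    from eigenvalue_smult_mat[OF S _ ev'] r0 have "eigenvalue S (Re z * r)" by simp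
    from ev[OF this] r0 have "\<bar>Re z\<bar> * r \<le> d" by (simp add: abs_mult)
    with r have "\<bar>Re z\<bar> * r < 1 * r" by linarith
    then have "\<bar>Re z\<bar> < 1" using r0 by (simp only: mult_less_cancel_right_pos)
    then show ?thesis unfolding rho by (subst zr) simp
  qed
  from spectral_radius_jnf_norm_bound_less_1_upper_triangular[OF S' this]
  obtain c where c: "\<And>k. norm_bound (S' ^\<^sub>m k) c" by auto
  show ?thesis
  proof (rule that)
    fix k i j assume i: "i < n" and j: "j < n"
    have "S' ^\<^sub>m k = map_mat complex_of_real ((1/r)^k \<cdot>\<^sub>m (S ^\<^sub>m k))"
      unfolding S'_def of_real_hom.mat_hom_pow[OF smult_carrier_mat[OF S], symmetric] smult_pow_mat[OF S] ..
    with c[of k] i j S have "norm (complex_of_real ((1/r)^k * (S ^\<^sub>m k) $$ (i,j))) \<le> c"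
      unfolding norm_bound_def by auto
    then have "\<bar>(S ^\<^sub>m k) $$ (i,j)\<bar> / r^k \<le> c"
      using r0 by (simp add: abs_mult power_divide norm_divide norm_power del: of_real_power)
    then show "\<bar>(S ^\<^sub>m k) $$ (i,j)\<bar> \<le> c * r^k" using r0 by (simp add: field_simps)
  qed
qed

lemma symmetric_pow_sq_norm_bound:
  assumes S: "(S :: real mat) \<in> carrier_mat n n" and sym: "transpose_mat S = S" and n: "0 < n"
    and ev: "\<And>\<mu>. eigenvalue S \<mu> \<Longrightarrow> \<bar>\<mu>\<bar> \<le> d" and d: "0 \<le> d" and r: "d < r"
    and y: "y \<in> carrier_vec n"
  obtains C where "\<And>k. (S ^\<^sub>m k *\<^sub>v y) \<bullet> (S ^\<^sub>m k *\<^sub>v y) \<le> C * (r^k)^2"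
proof -
  obtain c where c: "\<And>k i j. i < n \<Longrightarrow> j < n \<Longrightarrow> \<bar>(S ^\<^sub>m k) $$ (i,j)\<bar> \<le> c * r^k"
    using symmetric_pow_entries_bound[OF S sym n ev d r] by blast
  define Y where "Y = (\<Sum>j<n. \<bar>y $ j\<bar>)"
  show ?thesis
  proof (rule that)
    fix k
    have comp: "\<bar>(S ^\<^sub>m k *\<^sub>v y) $ i\<bar> \<le> c * r^k * Y" if "i < n" for i
      unfolding Y_def by (rule abs_mult_mat_vec_index_le[OF _ c y that]) (use S in auto)
    have "(S ^\<^sub>m k *\<^sub>v y) \<bullet> (S ^\<^sub>m k *\<^sub>v y) = (\<Sum>i<n. \<bar>(S ^\<^sub>m k *\<^sub>v y) $ i\<bar>^2)"
      using S y by (auto simp: scalar_prod_def lessThan_atLeast0 power2_eq_square)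
    also have "\<dots> \<le> (\<Sum>i<n. (c * r^k * Y)^2)"
      by (intro sum_mono power_mono comp) auto
    finally show "(S ^\<^sub>m k *\<^sub>v y) \<bullet> (S ^\<^sub>m k *\<^sub>v y) \<le> (real n * (c * Y)^2) * (r^k)^2"
      by (simp add: power_mult_distrib ac_simps)
  qed
qed

lemma sq_norm_mult_le_pow2:
  assumes S: "(S :: real mat) \<in> carrier_mat n n" and sym: "transpose_mat S = S"
    and y: "y \<in> carrier_vec n"
  shows "((S *\<^sub>v y) \<bullet> (S *\<^sub>v y))^(2^k)
    \<le> (y \<bullet> y)^(2^k - 1) * ((S ^\<^sub>m (2^k) *\<^sub>v y) \<bullet> (S ^\<^sub>m (2^k) *\<^sub>v y))"
  using S sym
proof (induct k arbitrary: S)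
  case 0
  then have "S ^\<^sub>m (2^0) = S" by (auto intro!: eq_matI simp: scalar_prod_def)
  then show ?case by simp
next
  case (Suc k S)
  let ?N = "\<lambda>v. (v :: real vec) \<bullet> v"
  have SS: "S * S \<in> carrier_mat n n" using Suc(2) by auto
  have IH: "?N ((S * S) *\<^sub>v y)^(2^k) \<le> ?N y^(2^k - 1) * ?N (S ^\<^sub>m (2^Suc k) *\<^sub>v y)"
    using Suc(1)[OF SS] Suc(2,3) pow_mat_mult_self[OF Suc(2)] by (simp add: transpose_mult)
  have "?N (S *\<^sub>v y) = y \<bullet> ((S * S) *\<^sub>v y)"
    using transpose_vec_mult_scalar[OF Suc(2), of "S *\<^sub>v y" y] Suc(2,3) y by auto
  then have CS: "?N (S *\<^sub>v y)^2 \<le> ?N y * ?N ((S * S) *\<^sub>v y)"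
    using cauchy_schwarz_scalar_prod[OF y, of "(S * S) *\<^sub>v y"] SS y by auto
  have "?N (S *\<^sub>v y)^(2^Suc k) = (?N (S *\<^sub>v y)^2)^(2^k)"
    by (simp add: power_mult[symmetric] mult.commute)
  also have "\<dots> \<le> ?N y^(2^k) * ?N ((S * S) *\<^sub>v y)^(2^k)"
    unfolding power_mult_distrib[symmetric] by (rule power_mono[OF CS]) simp
  also have "\<dots> \<le> ?N y^(2^k) * (?N y^(2^k - 1) * ?N (S ^\<^sub>m (2^Suc k) *\<^sub>v y))"
    by (rule mult_left_mono[OF IH]) (simp add: scalar_prod_self_nonneg)
  also have "\<dots> = ?N y^(2^Suc k - 1) * ?N (S ^\<^sub>m (2^Suc k) *\<^sub>v y)"
  proof -
    have "(2::nat)^k + (2^k - 1) = 2^Suc k - 1" using one_le_power[of "2::nat" k] by simp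
    then show ?thesis by (simp add: power_add[symmetric] del: power_Suc)
  qed
  finally show ?case .
qed

text \<open>No spectral theorem is needed: Cauchy-Schwarz bounds the \<open>2\<^sup>k\<close>-th power of \<open>|S y|\<^sup>2\<close> by a
  power of \<open>|y|\<^sup>2\<close> times \<open>|S^(2^k) y|\<^sup>2\<close>, and the entries of \<open>S^k\<close> grow at most like \<open>r^k\<close>
  because \<open>S / r\<close> has spectral radius below 1.\<close>
lemma symmetric_sq_norm_bound_gt:
  assumes S: "(S :: real mat) \<in> carrier_mat n n" and sym: "transpose_mat S = S" and n: "0 < n"
    and ev: "\<And>\<mu>. eigenvalue S \<mu> \<Longrightarrow> \<bar>\<mu>\<bar> \<le> d" and d: "0 \<le> d" and r: "d < r"
    and y: "y \<in> carrier_vec n"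
  shows "(S *\<^sub>v y) \<bullet> (S *\<^sub>v y) \<le> r^2 * (y \<bullet> y)"
proof (rule ccontr)
  let ?N = "\<lambda>v. (v :: real vec) \<bullet> v"
  assume "\<not> ?thesis"
  then have gt: "r^2 * ?N y < ?N (S *\<^sub>v y)" by simp
  have r0: "0 < r" using d r by linarith
  have Ny: "0 < ?N y"
  proof (rule ccontr)
    assume "\<not> 0 < ?N y"
    then have "y = 0\<^sub>v n"
      using scalar_prod_self_nonneg[of y] scalar_prod_self_eq_0_iff[OF y] by linarith
    with gt S show False by (simp add: mult_mat_vec_zero_vec)
  qed
  obtain C where C: "\<And>k. ?N (S ^\<^sub>m k *\<^sub>v y) \<le> C * (r^k)^2"
    using symmetric_pow_sq_norm_bound[OF S sym n ev d r y] by blast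
  define q where "q = ?N (S *\<^sub>v y) / (r^2 * ?N y)"
  have q: "1 < q" unfolding q_def using gt r0 Ny by simp
  have NSy: "?N (S *\<^sub>v y) = q * (r^2 * ?N y)" unfolding q_def using r0 Ny by simp
  have bounded: "q^(2^k) * ?N y \<le> C" for k
  proof -
    obtain j where j: "(2::nat)^k = Suc j" using not0_implies_Suc[of "2^k"] by auto
    have "(q * (r^2 * ?N y))^Suc j \<le> ?N y^j * ?N (S ^\<^sub>m Suc j *\<^sub>v y)"
      using sq_norm_mult_le_pow2[OF S sym y, of k] unfolding NSy j by simp
    also have "\<dots> \<le> ?N y^j * (C * (r^Suc j)^2)"
      by (rule mult_left_mono[OF C]) (simp add: scalar_prod_self_nonneg)
    finally have "(q^Suc j * ?N y) * ((r^Suc j)^2 * ?N y^j) \<le> C * ((r^Suc j)^2 * ?N y^j)"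
      by (simp add: power_mult_distrib ac_simps flip: power_mult)
    moreover have "0 < (r^Suc j)^2 * ?N y^j" using r0 Ny by simp
    ultimately show ?thesis unfolding j by (simp only: mult_le_cancel_right_pos)
  qed
  obtain k where "C / ?N y < q^k" using real_arch_pow[OF q] by blast
  also have "\<dots> \<le> q^(2^k)"
    using q by (intro power_increasing) (auto intro: less_imp_le[OF less_exp])
  finally show False using bounded[of k] Ny by (simp add: divide_less_eq)
qed

lemma symmetric_sq_norm_bound:
  assumes S: "(S :: real mat) \<in> carrier_mat n n" and sym: "transpose_mat S = S" and n: "0 < n"
    and ev: "\<And>\<mu>. eigenvalue S \<mu> \<Longrightarrow> \<bar>\<mu>\<bar> \<le> d" and d: "0 \<le> d"
    and y: "y \<in> carrier_vec n"
  shows "(S *\<^sub>v y) \<bullet> (S *\<^sub>v y) \<le> d^2 * (y \<bullet> y)"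
proof (cases "y \<bullet> y = 0")
  case True
  then show ?thesis using S y by (simp add: scalar_prod_self_eq_0_iff mult_mat_vec_zero_vec)
next
  case False
  then have Ny: "0 < y \<bullet> y" using scalar_prod_self_nonneg[of y] by linarith
  have "sqrt ((S *\<^sub>v y) \<bullet> (S *\<^sub>v y) / (y \<bullet> y)) \<le> d"
  proof (rule dense_ge)
    fix r assume r: "d < r"
    with symmetric_sq_norm_bound_gt[OF S sym n ev d r y] Ny
    have "(S *\<^sub>v y) \<bullet> (S *\<^sub>v y) / (y \<bullet> y) \<le> r^2" by (simp add: divide_le_eq)
    then show "sqrt ((S *\<^sub>v y) \<bullet> (S *\<^sub>v y) / (y \<bullet> y)) \<le> r" using d r by (simp add: real_le_lsqrt)
  qed
  then have "(S *\<^sub>v y) \<bullet> (S *\<^sub>v y) / (y \<bullet> y) \<le> d^2" by (rule sqrt_le_D)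
  then show ?thesis using Ny by (simp add: divide_le_eq)
qed

lemma resolvent_sq_norm_bound:
  assumes P: "(P :: real mat) \<in> carrier_mat n n" and sym: "transpose_mat P = P" and n: "0 < n"
    and \<alpha>: "0 < \<alpha>" and g: "1/2 \<le> g" "g < 1"
    and ev: "\<And>\<mu>. eigenvalue P \<mu> \<Longrightarrow> \<alpha>^2 + \<mu>^2 \<le> g * (\<alpha> + \<mu>)^2"
    and y: "y \<in> carrier_vec n"
  shows "\<alpha>^2 * (y \<bullet> y) + (P *\<^sub>v y) \<bullet> (P *\<^sub>v y) \<le> g * ((\<alpha> \<cdot>\<^sub>v y + P *\<^sub>v y) \<bullet> (\<alpha> \<cdot>\<^sub>v y + P *\<^sub>v y))"
proof -
  define c where "c = \<alpha> * g / (1 - g)"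
  have cg: "c * (1 - g) = \<alpha> * g" unfolding c_def using g by simp
  have "\<alpha> \<le> c" unfolding c_def using g \<alpha> by (simp add: field_simps)
  then have dd: "0 \<le> c^2 - \<alpha>^2" using \<alpha> by (simp add: power_mono)
  define S where "S = (-c) \<cdot>\<^sub>m 1\<^sub>m n + P"
  have S: "S \<in> carrier_mat n n" unfolding S_def using P by simp
  have symS: "transpose_mat S = S"
    using P sym unfolding S_def by (subst transpose_add[of _ n n]) (auto simp: transpose_smult_mat)
  txt \<open>With this \<open>c\<close> the eigenvalue condition becomes \<open>\<bar>\<mu> - c\<bar>\<^sup>2 \<le> c\<^sup>2 - \<alpha>\<^sup>2\<close>, a norm bound
    for \<open>P - c I\<close>.\<close>
  have evS: "\<bar>\<mu>\<bar> \<le> sqrt (c^2 - \<alpha>^2)" if "eigenvalue S \<mu>" for \<mu>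
  proof -
    from ev[OF eigenvalue_add_smult_one[OF P that[unfolded S_def]]]
    have "\<alpha>^2 + (\<mu> + c)^2 \<le> g * (\<alpha> + (\<mu> + c))^2" by simp
    then have "(1 - g) * ((\<mu> + c)^2 + \<alpha>^2) - 2 * (\<alpha> * g) * (\<mu> + c) \<le> 0"
      by (simp add: power2_eq_square algebra_simps)
    then have "(1 - g) * (\<mu>^2 - (c^2 - \<alpha>^2)) \<le> 0"
      unfolding cg[symmetric] by (simp add: power2_eq_square algebra_simps)
    then show ?thesis using g by (simp add: mult_le_0_iff real_le_rsqrt)
  qed
  have Py: "P *\<^sub>v y \<in> carrier_vec n" using P y by simp
  have "S *\<^sub>v y = (-c) \<cdot>\<^sub>v y + 1 \<cdot>\<^sub>v (P *\<^sub>v y)"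
    unfolding S_def using P y by (simp add: add_smult_one_mult_mat_vec)
  then have "(S *\<^sub>v y) \<bullet> (S *\<^sub>v y) = c^2 * (y \<bullet> y) - 2 * c * (y \<bullet> (P *\<^sub>v y)) + (P *\<^sub>v y) \<bullet> (P *\<^sub>v y)"
    by (simp only: scalar_prod_lincomb_self[OF y Py]) simp
  with symmetric_sq_norm_bound[OF S symS n evS _ y] dd
  have shifted: "(P *\<^sub>v y) \<bullet> (P *\<^sub>v y) + \<alpha>^2 * (y \<bullet> y) \<le> 2 * c * (y \<bullet> (P *\<^sub>v y))"
    by (simp add: algebra_simps)
  have "(1 - g) * ((P *\<^sub>v y) \<bullet> (P *\<^sub>v y) + \<alpha>^2 * (y \<bullet> y)) \<le> 2 * (c * (1 - g)) * (y \<bullet> (P *\<^sub>v y))"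
    using mult_left_mono[OF shifted, of "1 - g"] g by (simp add: algebra_simps)
  moreover have "(\<alpha> \<cdot>\<^sub>v y + P *\<^sub>v y) \<bullet> (\<alpha> \<cdot>\<^sub>v y + P *\<^sub>v y)
      = \<alpha>^2 * (y \<bullet> y) + 2 * \<alpha> * (y \<bullet> (P *\<^sub>v y)) + (P *\<^sub>v y) \<bullet> (P *\<^sub>v y)"
    using scalar_prod_lincomb_self[OF y Py, of \<alpha> 1] by simp
  ultimately show ?thesis unfolding cg by (simp add: algebra_simps)
qed

section \<open>Four-block structure\<close>

definition vec4 :: "'a vec \<Rightarrow> 'a vec \<Rightarrow> 'a vec \<Rightarrow> 'a vec \<Rightarrow> 'a vec" where
  "vec4 y1 y2 y3 y4 = (y1 @\<^sub>v y2) @\<^sub>v (y3 @\<^sub>v y4)"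

lemma vec4_zero: "vec4 (0\<^sub>v m) (0\<^sub>v m) (0\<^sub>v m) (0\<^sub>v m) = (0\<^sub>v (4 * m) :: 'a :: zero vec)"
  unfolding vec4_def by (rule eq_vecI) auto

lemma vec4_cases:
  assumes "y \<in> carrier_vec (4 * m)"
  obtains y1 y2 y3 y4 where "y1 \<in> carrier_vec m" "y2 \<in> carrier_vec m" "y3 \<in> carrier_vec m"
    "y4 \<in> carrier_vec m" "y = vec4 y1 y2 y3 y4"
proof -
  have "(m + m) + (m + m) = 4 * m" by simp
  then have y: "y \<in> carrier_vec ((m + m) + (m + m))" using assms by metis
  define u where "u = vec_first y (m + m)"
  define w where "w = vec_last y (m + m)"
  have u: "u \<in> carrier_vec (m + m)" and w: "w \<in> carrier_vec (m + m)" unfolding u_def w_def by auto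
  have "y = (vec_first u m @\<^sub>v vec_last u m) @\<^sub>v (vec_first w m @\<^sub>v vec_last w m)"
    using vec_first_last_append[OF y] vec_first_last_append[OF u] vec_first_last_append[OF w]
    unfolding u_def w_def by simp
  then show ?thesis by (intro that[of "vec_first u m" "vec_last u m" "vec_first w m" "vec_last w m"])
      (auto simp: vec4_def)
qed

lemma vec4_eq_iff:
  assumes "y1 \<in> carrier_vec m" "y2 \<in> carrier_vec m" "y3 \<in> carrier_vec m" "y4 \<in> carrier_vec m"
    "z1 \<in> carrier_vec m" "z2 \<in> carrier_vec m" "z3 \<in> carrier_vec m" "z4 \<in> carrier_vec m"
  shows "vec4 y1 y2 y3 y4 = vec4 z1 z2 z3 z4 \<longleftrightarrow> y1 = z1 \<and> y2 = z2 \<and> y3 = z3 \<and> y4 = z4"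
proof -
  have y12: "y1 @\<^sub>v y2 \<in> carrier_vec (m + m)" and z12: "z1 @\<^sub>v z2 \<in> carrier_vec (m + m)"
    using assms by auto
  show ?thesis unfolding vec4_def append_vec_eq[OF y12 z12] append_vec_eq[OF assms(1,5)]
      append_vec_eq[OF assms(3,7)] by simp
qed

lemma scalar_prod_vec4:
  assumes "y1 \<in> carrier_vec m" "y2 \<in> carrier_vec m" "y3 \<in> carrier_vec m" "y4 \<in> carrier_vec m"
    "z1 \<in> carrier_vec m" "z2 \<in> carrier_vec m" "z3 \<in> carrier_vec m" "z4 \<in> carrier_vec m"
  shows "vec4 y1 y2 y3 y4 \<bullet> vec4 z1 z2 z3 z4 = y1 \<bullet> z1 + y2 \<bullet> z2 + y3 \<bullet> z3 + y4 \<bullet> z4"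
proof -
  have "y1 @\<^sub>v y2 \<in> carrier_vec (m + m)" "y3 @\<^sub>v y4 \<in> carrier_vec (m + m)"
    "z1 @\<^sub>v z2 \<in> carrier_vec (m + m)" "z3 @\<^sub>v z4 \<in> carrier_vec (m + m)" using assms by auto
  then show ?thesis unfolding vec4_def
    by (simp add: scalar_prod_append scalar_prod_append[OF assms(1,2) assms(5,6)]
        scalar_prod_append[OF assms(3,4) assms(7,8)] add.assoc)
qed

lemma smult_vec4: "c \<cdot>\<^sub>v vec4 y1 y2 y3 y4 = vec4 (c \<cdot>\<^sub>v y1) (c \<cdot>\<^sub>v y2) (c \<cdot>\<^sub>v y3) (c \<cdot>\<^sub>v y4)"
proof -
  have "c \<cdot>\<^sub>v (v @\<^sub>v w) = (c \<cdot>\<^sub>v v) @\<^sub>v (c \<cdot>\<^sub>v w)" for v w :: "'a vec"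
    by (rule eq_vecI) auto
  then show ?thesis unfolding vec4_def by simp
qed

definition G_block :: "real \<Rightarrow> real \<Rightarrow> nat \<Rightarrow> real mat" where
  "G_block a s m = (let I = (1\<^sub>m m :: real mat); Z = (0\<^sub>m m m :: real mat) in
     four_block_mat
       (four_block_mat Z (a \<cdot>\<^sub>m I) ((- a) \<cdot>\<^sub>m I) Z)
       (four_block_mat (s \<cdot>\<^sub>m I) Z Z (s \<cdot>\<^sub>m I))
       (four_block_mat ((- s) \<cdot>\<^sub>m I) Z Z ((- s) \<cdot>\<^sub>m I))
       (four_block_mat Z ((- a) \<cdot>\<^sub>m I) (a \<cdot>\<^sub>m I) Z))"

lemma G_mat_eq_smult_G_block:
  "G_mat m \<nu> \<omega> = (1 / sqrt (\<nu> * (1 + \<nu> * \<omega>^2))) \<cdot>\<^sub>m G_block (\<omega> * \<nu>) (sqrt \<nu>) m"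
  unfolding G_mat_def G_block_def Let_def ..

lemma G_block_carrier [simp]: "G_block a s m \<in> carrier_mat (4 * m) (4 * m)"
proof -
  have "G_block a s m \<in> carrier_mat ((m + m) + (m + m)) ((m + m) + (m + m))"
    unfolding G_block_def Let_def by (intro four_block_carrier_mat) auto
  moreover have "(m + m) + (m + m) = 4 * m" by simp
  ultimately show ?thesis by metis
qed

lemma G_mat_carrier [simp]: "G_mat m \<nu> \<omega> \<in> carrier_mat (4 * m) (4 * m)"
  unfolding G_mat_eq_smult_G_block by simp

lemma G_block_mult_vec4:
  assumes y: "y1 \<in> carrier_vec m" "y2 \<in> carrier_vec m" "y3 \<in> carrier_vec m" "y4 \<in> carrier_vec m"
  shows "G_block a s m *\<^sub>v vec4 y1 y2 y3 y4 = vec4 (a \<cdot>\<^sub>v y2 + s \<cdot>\<^sub>v y3) ((-a) \<cdot>\<^sub>v y1 + s \<cdot>\<^sub>v y4)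
      ((-s) \<cdot>\<^sub>v y1 + (-a) \<cdot>\<^sub>v y4) ((-s) \<cdot>\<^sub>v y2 + a \<cdot>\<^sub>v y3)"
proof -
  let ?I = "1\<^sub>m m :: real mat" and ?Z = "0\<^sub>m m m :: real mat"
  have I: "c \<cdot>\<^sub>m ?I \<in> carrier_mat m m" for c by simp
  have Z: "?Z \<in> carrier_mat m m" by simp
  have Iv: "(c \<cdot>\<^sub>m ?I) *\<^sub>v v = c \<cdot>\<^sub>v v" and Zv: "?Z *\<^sub>v v = 0\<^sub>v m" if "v \<in> carrier_vec m" for c v
    using that by (auto simp: smult_mat_mult_mat_vec zero_mat_mult_vec)
  note inner = four_block_mat_mult_vec[OF Z I I Z] four_block_mat_mult_vec[OF I Z Z I]
  have "G_block a s m *\<^sub>v vec4 y1 y2 y3 y4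
    = ((a \<cdot>\<^sub>v y2 @\<^sub>v (-a) \<cdot>\<^sub>v y1) + (s \<cdot>\<^sub>v y3 @\<^sub>v s \<cdot>\<^sub>v y4))
      @\<^sub>v (((-s) \<cdot>\<^sub>v y1 @\<^sub>v (-s) \<cdot>\<^sub>v y2) + ((-a) \<cdot>\<^sub>v y4 @\<^sub>v a \<cdot>\<^sub>v y3))"
    unfolding G_block_def Let_def vec4_def
    by (subst four_block_mat_mult_vec) (use y in \<open>auto intro!: four_block_carrier_mat simp: inner Iv Zv\<close>)
  also have "\<dots> = vec4 (a \<cdot>\<^sub>v y2 + s \<cdot>\<^sub>v y3) ((-a) \<cdot>\<^sub>v y1 + s \<cdot>\<^sub>v y4)
      ((-s) \<cdot>\<^sub>v y1 + (-a) \<cdot>\<^sub>v y4) ((-s) \<cdot>\<^sub>v y2 + a \<cdot>\<^sub>v y3)"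
    unfolding vec4_def using y by (subst append_vec_add[of _ m], auto)+
  finally show ?thesis .
qed

lemma scalar_prod_self_G_block:
  assumes w: "w \<in> carrier_vec (4 * m)"
  shows "(G_block a s m *\<^sub>v w) \<bullet> (G_block a s m *\<^sub>v w) = (a^2 + s^2) * (w \<bullet> w)"
proof -
  obtain w1 w2 w3 w4 where c: "w1 \<in> carrier_vec m" "w2 \<in> carrier_vec m" "w3 \<in> carrier_vec m"
    "w4 \<in> carrier_vec m" and wd: "w = vec4 w1 w2 w3 w4"
    using vec4_cases[OF w] by blast
  show ?thesis
    unfolding wd G_block_mult_vec4[OF c]
    using c by (simp add: scalar_prod_vec4[where m = m] scalar_prod_lincomb_self[where n = m]
        comm_scalar_prod[of w1 m w4] comm_scalar_prod[of w2 m w3] power2_eq_square algebra_simps)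
qed

lemma diag_block_mat_4:
  assumes P: "P \<in> carrier_mat m m"
  shows "diag_block_mat [P, P, P, P] =
    four_block_mat (four_block_mat P (0\<^sub>m m m) (0\<^sub>m m m) P) (0\<^sub>m (m + m) (m + m))
      (0\<^sub>m (m + m) (m + m)) (four_block_mat P (0\<^sub>m m m) (0\<^sub>m m m) P)"
proof -
  have P2: "diag_block_mat [P, P] = four_block_mat P (0\<^sub>m m m) (0\<^sub>m m m) P"
    using diag_block_mat.simps(2)[of P "[P]"] P by (simp only: diag_block_mat_singleton Let_def) simp
  have "diag_block_mat [P, P, P, P] = diag_block_mat ([P, P] @ [P, P])" by simp
  then show ?thesis unfolding diag_block_mat_append Let_def P2 using P by simp
qed

lemma diag_block_mat_4_carrier [simp]:
  assumes "P \<in> carrier_mat m m"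
  shows "diag_block_mat [P, P, P, P] \<in> carrier_mat (4 * m) (4 * m)"
proof -
  have "diag_block_mat [P, P, P, P] \<in> carrier_mat ((m + m) + (m + m)) ((m + m) + (m + m))"
    unfolding diag_block_mat_4[OF assms] by (intro four_block_carrier_mat) (use assms in auto)
  moreover have "(m + m) + (m + m) = 4 * m" by simp
  ultimately show ?thesis by metis
qed

lemma diag_block_mat_4_mult_vec4:
  assumes P: "P \<in> carrier_mat m m"
    and y: "y1 \<in> carrier_vec m" "y2 \<in> carrier_vec m" "y3 \<in> carrier_vec m" "y4 \<in> carrier_vec m"
  shows "diag_block_mat [P, P, P, P] *\<^sub>v vec4 y1 y2 y3 y4
    = vec4 (P *\<^sub>v y1) (P *\<^sub>v y2) (P *\<^sub>v y3) (P *\<^sub>v y4)"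
proof -
  let ?Q = "four_block_mat P (0\<^sub>m m m) (0\<^sub>m m m) P"
  have Q: "?Q \<in> carrier_mat (m + m) (m + m)" by (intro four_block_carrier_mat P)
  have Z: "0\<^sub>m k k \<in> carrier_mat k k" for k :: nat by simp
  have "y1 @\<^sub>v y2 \<in> carrier_vec (m + m)" "y3 @\<^sub>v y4 \<in> carrier_vec (m + m)" using y by auto
  then show ?thesis
    unfolding diag_block_mat_4[OF P] vec4_def
    using y P by (simp add: four_block_mat_mult_vec[OF Q Z Z Q] four_block_mat_mult_vec[OF P Z Z P]
        zero_mat_mult_vec)
qed

lemma transpose_diag_block_mat_4:
  assumes P: "P \<in> carrier_mat m m" and sym: "transpose_mat P = P"
  shows "transpose_mat (diag_block_mat [P, P, P, P]) = diag_block_mat [P, P, P, P]"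
proof -
  let ?Q = "four_block_mat P (0\<^sub>m m m) (0\<^sub>m m m) P"
  have Q: "?Q \<in> carrier_mat (m + m) (m + m)" by (intro four_block_carrier_mat P)
  have Z: "0\<^sub>m k k \<in> carrier_mat k k" for k :: nat by simp
  have "transpose_mat ?Q = ?Q" unfolding transpose_four_block_mat[OF P Z Z P] sym by simp
  then show ?thesis unfolding diag_block_mat_4[OF P] transpose_four_block_mat[OF Q Z Z Q] by simp
qed

lemma eigenvalue_diag_block_mat_4:
  assumes P: "P \<in> carrier_mat m m" and ev: "eigenvalue (diag_block_mat [P, P, P, P]) \<mu>"
  shows "eigenvalue P \<mu>"
proof -
  define D where "D = diag_block_mat [P, P, P, P]"
  have D: "D \<in> carrier_mat (4 * m) (4 * m)" unfolding D_def by (rule diag_block_mat_4_carrier[OF P])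
  from ev[folded D_def] D obtain v where v: "v \<in> carrier_vec (4 * m)" "v \<noteq> 0\<^sub>v (4 * m)"
    "D *\<^sub>v v = \<mu> \<cdot>\<^sub>v v"
    unfolding eigenvalue_def eigenvector_def by auto
  obtain v1 v2 v3 v4 where c: "v1 \<in> carrier_vec m" "v2 \<in> carrier_vec m" "v3 \<in> carrier_vec m"
    "v4 \<in> carrier_vec m" and vd: "v = vec4 v1 v2 v3 v4"
    using vec4_cases[OF v(1)] by blast
  from v(3) have "P *\<^sub>v v1 = \<mu> \<cdot>\<^sub>v v1 \<and> P *\<^sub>v v2 = \<mu> \<cdot>\<^sub>v v2 \<and> P *\<^sub>v v3 = \<mu> \<cdot>\<^sub>v v3 \<and> P *\<^sub>v v4 = \<mu> \<cdot>\<^sub>v v4"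
    unfolding vd D_def diag_block_mat_4_mult_vec4[OF P c] smult_vec4 using P c by (subst (asm) vec4_eq_iff) auto
  moreover have "v1 \<noteq> 0\<^sub>v m \<or> v2 \<noteq> 0\<^sub>v m \<or> v3 \<noteq> 0\<^sub>v m \<or> v4 \<noteq> 0\<^sub>v m"
    using v(2) unfolding vd by (auto simp: vec4_zero)
  ultimately show ?thesis using c P unfolding eigenvalue_def eigenvector_def by auto
qed

lemma diag_block_mat_4_psd:
  assumes P: "(P :: real mat) \<in> carrier_mat m m" and psd: "\<And>x. x \<in> carrier_vec m \<Longrightarrow> 0 \<le> x \<bullet> (P *\<^sub>v x)"
    and y: "y \<in> carrier_vec (4 * m)"
  shows "0 \<le> y \<bullet> (diag_block_mat [P, P, P, P] *\<^sub>v y)"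
proof -
  obtain y1 y2 y3 y4 where c: "y1 \<in> carrier_vec m" "y2 \<in> carrier_vec m" "y3 \<in> carrier_vec m"
    "y4 \<in> carrier_vec m" and yd: "y = vec4 y1 y2 y3 y4"
    using vec4_cases[OF y] by blast
  have "y \<bullet> (diag_block_mat [P, P, P, P] *\<^sub>v y)
    = y1 \<bullet> (P *\<^sub>v y1) + y2 \<bullet> (P *\<^sub>v y2) + y3 \<bullet> (P *\<^sub>v y3) + y4 \<bullet> (P *\<^sub>v y4)"
    unfolding yd diag_block_mat_4_mult_vec4[OF P c] using c P by (subst scalar_prod_vec4[where m = m]) auto
  with psd[OF c(1)] psd[OF c(2)] psd[OF c(3)] psd[OF c(4)] show ?thesis by linarith
qed

lemma smult_diag_block_mat_4:
  assumes P: "(P :: 'a :: semiring_0 mat) \<in> carrier_mat m m"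
  shows "c \<cdot>\<^sub>m diag_block_mat [P, P, P, P] = diag_block_mat [c \<cdot>\<^sub>m P, c \<cdot>\<^sub>m P, c \<cdot>\<^sub>m P, c \<cdot>\<^sub>m P]"
proof -
  let ?Q = "four_block_mat P (0\<^sub>m m m) (0\<^sub>m m m) P"
  have Q: "?Q \<in> carrier_mat (m + m) (m + m)" by (intro four_block_carrier_mat P)
  have Z: "0\<^sub>m k k \<in> carrier_mat k k" for k :: nat by simp
  show ?thesis
    unfolding diag_block_mat_4[OF P] diag_block_mat_4[OF smult_carrier_mat[OF P]]
      smult_four_block_mat[OF Q Z Z Q] smult_four_block_mat[OF P Z Z P] by simp
qed

text \<open>\<open>G_block a s m\<close> is skew-symmetric and commutes with every \<open>diag_block_mat [P, P, P, P]\<close>,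
  so for symmetric \<open>P\<close> their product is skew-symmetric.\<close>
lemma G_block_diag_block_mat_4_orthogonal:
  assumes P: "(P :: real mat) \<in> carrier_mat m m" and sym: "transpose_mat P = P"
    and y: "y \<in> carrier_vec (4 * m)"
  shows "y \<bullet> (G_block a s m *\<^sub>v (diag_block_mat [P, P, P, P] *\<^sub>v y)) = 0"
proof -
  obtain y1 y2 y3 y4 where c: "y1 \<in> carrier_vec m" "y2 \<in> carrier_vec m" "y3 \<in> carrier_vec m"
    "y4 \<in> carrier_vec m" and yd: "y = vec4 y1 y2 y3 y4"
    using vec4_cases[OF y] by blast
  have Pc: "P *\<^sub>v y1 \<in> carrier_vec m" "P *\<^sub>v y2 \<in> carrier_vec m" "P *\<^sub>v y3 \<in> carrier_vec m"
    "P *\<^sub>v y4 \<in> carrier_vec m" using P c by auto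
  have swap: "v \<bullet> (P *\<^sub>v u) = u \<bullet> (P *\<^sub>v v)" if "u \<in> carrier_vec m" "v \<in> carrier_vec m" for u v
    using transpose_vec_mult_scalar[OF P that] comm_scalar_prod[of "P *\<^sub>v v" m u] P that
    unfolding sym by auto
  show ?thesis
    unfolding yd diag_block_mat_4_mult_vec4[OF P c] G_block_mult_vec4[OF Pc]
    using c Pc by (simp add: scalar_prod_vec4[where m = m] scalar_prod_add_distrib[of _ m]
        swap[OF c(1) c(2)] swap[OF c(1) c(3)] swap[OF c(2) c(4)] swap[OF c(3) c(4)])
qed

lemma G_block_factor_sq_norm_bound:
  assumes P: "(P :: real mat) \<in> carrier_mat m m" and sym: "transpose_mat P = P" and m: "0 < m"
    and \<alpha>: "0 < \<alpha>" and g: "1/2 \<le> g" "g < 1"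
    and ev: "\<And>\<mu>. eigenvalue P \<mu> \<Longrightarrow> \<alpha>^2 + \<mu>^2 \<le> g * (\<alpha> + \<mu>)^2"
    and \<sigma>: "\<sigma>^2 * (a^2 + s^2) = 1" and y: "y \<in> carrier_vec (4 * m)"
  defines "D \<equiv> diag_block_mat [P, P, P, P]"
  shows "(\<alpha> \<cdot>\<^sub>v y + \<sigma> \<cdot>\<^sub>v (G_block a s m *\<^sub>v (D *\<^sub>v y))) \<bullet> (\<alpha> \<cdot>\<^sub>v y + \<sigma> \<cdot>\<^sub>v (G_block a s m *\<^sub>v (D *\<^sub>v y)))
    \<le> g * ((\<alpha> \<cdot>\<^sub>v y + D *\<^sub>v y) \<bullet> (\<alpha> \<cdot>\<^sub>v y + D *\<^sub>v y))"
proof -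
  have D: "D \<in> carrier_mat (4 * m) (4 * m)" unfolding D_def by (rule diag_block_mat_4_carrier[OF P])
  have Dy: "D *\<^sub>v y \<in> carrier_vec (4 * m)" using D y by simp
  have GDy: "G_block a s m *\<^sub>v (D *\<^sub>v y) \<in> carrier_vec (4 * m)"
    by (rule mult_mat_vec_carrier[OF G_block_carrier Dy])
  have "(\<alpha> \<cdot>\<^sub>v y + \<sigma> \<cdot>\<^sub>v (G_block a s m *\<^sub>v (D *\<^sub>v y))) \<bullet> (\<alpha> \<cdot>\<^sub>v y + \<sigma> \<cdot>\<^sub>v (G_block a s m *\<^sub>v (D *\<^sub>v y)))
    = \<alpha>^2 * (y \<bullet> y) + (D *\<^sub>v y) \<bullet> (D *\<^sub>v y)"
    unfolding scalar_prod_lincomb_self[OF y GDy] scalar_prod_self_G_block[OF Dy]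
      G_block_diag_block_mat_4_orthogonal[OF P sym y, folded D_def]
    using \<sigma> by (simp add: mult.assoc[symmetric])
  also have "\<dots> \<le> g * ((\<alpha> \<cdot>\<^sub>v y + D *\<^sub>v y) \<bullet> (\<alpha> \<cdot>\<^sub>v y + D *\<^sub>v y))"
    unfolding D_def
    by (rule resolvent_sq_norm_bound[OF diag_block_mat_4_carrier[OF P]
          transpose_diag_block_mat_4[OF P sym] _ \<alpha> g ev[OF eigenvalue_diag_block_mat_4[OF P]] y])
      (use m in simp)
  finally show ?thesis .
qed

text \<open>The factor in \<open>G_mat\<close> normalises \<open>G_block a s m\<close>, which is \<open>sqrt (a\<^sup>2 + s\<^sup>2)\<close> times an
  orthogonal matrix, so \<open>G_mat m \<nu> \<omega>\<close> is orthogonal.\<close>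
lemma G_mat_normalization:
  assumes \<nu>: "0 < \<nu>"
  shows "(1 / sqrt (\<nu> * (1 + \<nu> * \<omega>^2)))^2 * ((\<omega> * \<nu>)^2 + (sqrt \<nu>)^2) = 1"
proof -
  define p where "p = \<nu> * (1 + \<nu> * \<omega>^2)"
  have p: "0 < p" unfolding p_def using \<nu> by (simp add: add_pos_nonneg)
  have "(\<omega> * \<nu>)^2 + (sqrt \<nu>)^2 = p"
    unfolding p_def using \<nu> by (simp add: power2_eq_square algebra_simps)
  then show ?thesis unfolding p_def[symmetric] using p by (simp add: power_divide)
qed

lemma G_mat_factor_sq_norm_bounds:
  assumes P: "(P :: real mat) \<in> carrier_mat m m" and sym: "transpose_mat P = P" and m: "0 < m"
    and \<nu>: "0 < \<nu>" and \<alpha>: "0 < \<alpha>" and g: "1/2 \<le> g" "g < 1"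
    and ev: "\<And>\<mu>. eigenvalue P \<mu> \<Longrightarrow> \<alpha>^2 + \<mu>^2 \<le> g * (\<alpha> + \<mu>)^2"
    and y: "y \<in> carrier_vec (4 * m)"
  defines "D \<equiv> diag_block_mat [P, P, P, P]" and "I \<equiv> 1\<^sub>m (4 * m)"
  shows "((\<alpha> \<cdot>\<^sub>m I + G_mat m \<nu> \<omega> * D) *\<^sub>v y) \<bullet> ((\<alpha> \<cdot>\<^sub>m I + G_mat m \<nu> \<omega> * D) *\<^sub>v y)
      \<le> g * (((\<alpha> \<cdot>\<^sub>m I + D) *\<^sub>v y) \<bullet> ((\<alpha> \<cdot>\<^sub>m I + D) *\<^sub>v y))"
    and "((\<alpha> \<cdot>\<^sub>m I - G_mat m \<nu> \<omega> * D) *\<^sub>v y) \<bullet> ((\<alpha> \<cdot>\<^sub>m I - G_mat m \<nu> \<omega> * D) *\<^sub>v y)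
      \<le> g * (((\<alpha> \<cdot>\<^sub>m I + D) *\<^sub>v y) \<bullet> ((\<alpha> \<cdot>\<^sub>m I + D) *\<^sub>v y))"
proof -
  define c where "c = 1 / sqrt (\<nu> * (1 + \<nu> * \<omega>^2))"
  let ?G = "G_block (\<omega> * \<nu>) (sqrt \<nu>) m"
  have c: "c^2 * ((\<omega> * \<nu>)^2 + (sqrt \<nu>)^2) = 1" unfolding c_def by (rule G_mat_normalization[OF \<nu>])
  have D: "D \<in> carrier_mat (4 * m) (4 * m)" unfolding D_def by (rule diag_block_mat_4_carrier[OF P])
  have Dy: "D *\<^sub>v y \<in> carrier_vec (4 * m)" using D y by simp
  have GDc: "G_mat m \<nu> \<omega> * D \<in> carrier_mat (4 * m) (4 * m)"
    by (rule mult_carrier_mat[OF G_mat_carrier D])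
  have GD: "(G_mat m \<nu> \<omega> * D) *\<^sub>v y = c \<cdot>\<^sub>v (?G *\<^sub>v (D *\<^sub>v y))"
    unfolding G_mat_eq_smult_G_block c_def
    using assoc_mult_mat_vec[OF smult_carrier_mat[OF G_block_carrier] D y]
      smult_mat_mult_mat_vec[OF G_block_carrier Dy] by simp
  have "(\<alpha> \<cdot>\<^sub>m I + G_mat m \<nu> \<omega> * D) *\<^sub>v y = \<alpha> \<cdot>\<^sub>v y + c \<cdot>\<^sub>v (?G *\<^sub>v (D *\<^sub>v y))"
    unfolding I_def GD[symmetric] by (rule add_smult_one_mult_mat_vec[OF GDc y])
  moreover have "(\<alpha> \<cdot>\<^sub>m I - G_mat m \<nu> \<omega> * D) *\<^sub>v y = \<alpha> \<cdot>\<^sub>v y + (- c) \<cdot>\<^sub>v (?G *\<^sub>v (D *\<^sub>v y))"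
  proof -
    have "(\<alpha> \<cdot>\<^sub>m I - G_mat m \<nu> \<omega> * D) *\<^sub>v y = \<alpha> \<cdot>\<^sub>v y - c \<cdot>\<^sub>v (?G *\<^sub>v (D *\<^sub>v y))"
      unfolding I_def GD[symmetric] using GDc y
      by (simp add: minus_mult_distrib_mat_vec[of _ "4 * m" "4 * m"] smult_mat_mult_mat_vec[of _ "4 * m" "4 * m"])
    then show ?thesis using Dy by (auto intro!: eq_vecI)
  qed
  moreover have "(\<alpha> \<cdot>\<^sub>m I + D) *\<^sub>v y = \<alpha> \<cdot>\<^sub>v y + D *\<^sub>v y"
    unfolding I_def using D y by (simp add: add_smult_one_mult_mat_vec)
  moreover have "(- c)^2 * ((\<omega> * \<nu>)^2 + (sqrt \<nu>)^2) = 1" using c by simp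
  ultimately show "((\<alpha> \<cdot>\<^sub>m I + G_mat m \<nu> \<omega> * D) *\<^sub>v y) \<bullet> ((\<alpha> \<cdot>\<^sub>m I + G_mat m \<nu> \<omega> * D) *\<^sub>v y)
      \<le> g * (((\<alpha> \<cdot>\<^sub>m I + D) *\<^sub>v y) \<bullet> ((\<alpha> \<cdot>\<^sub>m I + D) *\<^sub>v y))"
    and "((\<alpha> \<cdot>\<^sub>m I - G_mat m \<nu> \<omega> * D) *\<^sub>v y) \<bullet> ((\<alpha> \<cdot>\<^sub>m I - G_mat m \<nu> \<omega> * D) *\<^sub>v y)
      \<le> g * (((\<alpha> \<cdot>\<^sub>m I + D) *\<^sub>v y) \<bullet> ((\<alpha> \<cdot>\<^sub>m I + D) *\<^sub>v y))"
    using G_block_factor_sq_norm_bound[OF P sym m \<alpha> g ev c y]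
      G_block_factor_sq_norm_bound[OF P sym m \<alpha> g ev _ y, of "- c"]
    unfolding D_def by simp_all
qed

section \<open>Contraction of the ASSS iteration\<close>

lemma sym_pos_def_matD:
  assumes "sym_pos_def_mat m M"
  shows "M \<in> carrier_mat m m" and "transpose_mat M = M"
    and "\<And>x. x \<in> carrier_vec m \<Longrightarrow> 0 \<le> x \<bullet> (M *\<^sub>v x)"
    and "\<And>\<mu>. eigenvalue M \<mu> \<Longrightarrow> 0 < \<mu>"
proof -
  show M: "M \<in> carrier_mat m m" "transpose_mat M = M"
    using assms unfolding sym_pos_def_mat_def by auto
  have pd: "0 < x \<bullet> (M *\<^sub>v x)" if "x \<in> carrier_vec m" "x \<noteq> 0\<^sub>v m" for x
    using assms that unfolding sym_pos_def_mat_def by auto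
  show "0 \<le> x \<bullet> (M *\<^sub>v x)" if x: "x \<in> carrier_vec m" for x
    using pd[OF x] M x by (cases "x = 0\<^sub>v m") (auto simp: mult_mat_vec_zero_vec)
  show "0 < \<mu>" if "eigenvalue M \<mu>" for \<mu>
  proof -
    from that M obtain v where v: "v \<in> carrier_vec m" "v \<noteq> 0\<^sub>v m" "M *\<^sub>v v = \<mu> \<cdot>\<^sub>v v"
      unfolding eigenvalue_def eigenvector_def by auto
    have "0 < \<mu> * (v \<bullet> v)" using pd[OF v(1,2)] v(1) unfolding v(3) by simp
    then show ?thesis using scalar_prod_self_nonneg[of v] by (simp add: zero_less_mult_iff)
  qed
qed

lemma sym_pos_def_mat_smult:
  assumes K: "sym_pos_def_mat m K" and e: "0 < e"
  shows "sym_pos_def_mat m (e \<cdot>\<^sub>m K)"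
  unfolding sym_pos_def_mat_def
proof (intro conjI ballI impI)
  show "e \<cdot>\<^sub>m K \<in> carrier_mat m m" "transpose_mat (e \<cdot>\<^sub>m K) = e \<cdot>\<^sub>m K"
    using sym_pos_def_matD(1,2)[OF K] by (auto simp: transpose_smult_mat)
  fix x :: "real vec" assume x: "x \<in> carrier_vec m" "x \<noteq> 0\<^sub>v m"
  then have "0 < x \<bullet> (K *\<^sub>v x)" using K unfolding sym_pos_def_mat_def by auto
  then show "0 < x \<bullet> ((e \<cdot>\<^sub>m K) *\<^sub>v x)"
    using e x(1) sym_pos_def_matD(1)[OF K] by (simp add: smult_mat_mult_mat_vec)
qed

lemma resolvent_ratio_bounds:
  assumes \<alpha>: "0 < \<alpha>" and x: "0 < x"
  shows "0 < sqrt (\<alpha>^2 + x^2) / (\<alpha> + x)" and "sqrt (\<alpha>^2 + x^2) / (\<alpha> + x) < 1"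
    and "1/2 \<le> (sqrt (\<alpha>^2 + x^2) / (\<alpha> + x))^2"
proof -
  show "0 < sqrt (\<alpha>^2 + x^2) / (\<alpha> + x)" using \<alpha> x by (simp add: add_pos_pos)
  have "sqrt (\<alpha>^2 + x^2) < \<alpha> + x"
    using \<alpha> x by (intro real_less_lsqrt) (simp_all add: power2_eq_square algebra_simps)
  then show "sqrt (\<alpha>^2 + x^2) / (\<alpha> + x) < 1" using \<alpha> x by simp
  have "(\<alpha> + x)^2 \<le> 2 * (\<alpha>^2 + x^2)"
    using zero_le_power2[of "\<alpha> - x"] by (simp add: power2_eq_square algebra_simps)
  then show "1/2 \<le> (sqrt (\<alpha>^2 + x^2) / (\<alpha> + x))^2"
    using \<alpha> x by (simp add: power_divide le_divide_eq)
qed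

lemma spectral_factor_bounds:
  assumes M: "sym_pos_def_mat m M" and m: "0 < m" and \<alpha>: "0 < \<alpha>" and e: "0 < e"
  defines "\<Gamma> \<equiv> Max ((\<lambda>\<mu>. sqrt (\<alpha>^2 + (e * \<mu>)^2) / (\<alpha> + e * \<mu>)) ` spectrum M)"
  shows "0 < \<Gamma>" and "\<Gamma> < 1" and "1/2 \<le> \<Gamma>^2"
    and "\<And>\<mu>. eigenvalue (e \<cdot>\<^sub>m M) \<mu> \<Longrightarrow> \<alpha>^2 + \<mu>^2 \<le> \<Gamma>^2 * (\<alpha> + \<mu>)^2"
proof -
  note Mf = sym_pos_def_matD[OF M]
  let ?h = "\<lambda>\<mu>. sqrt (\<alpha>^2 + (e * \<mu>)^2) / (\<alpha> + e * \<mu>)"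
  have pos: "0 < e * \<mu>" if "\<mu> \<in> spectrum M" for \<mu>
    using Mf(4) that e unfolding spectrum_def by simp
  have fin: "finite (spectrum M)" by (rule card_finite_spectrum(1)[OF Mf(1)])
  have "spectrum (map_mat complex_of_real M) \<noteq> {}"
    by (rule spectrum_non_empty[OF _ m]) (use Mf(1) in simp)
  then obtain z where "eigenvalue (map_mat complex_of_real M) z" unfolding spectrum_def by auto
  then have "Re z \<in> spectrum M"
    unfolding spectrum_def using symmetric_real_eigenvalue(2)[OF Mf(1,2)] by simp
  then have "spectrum M \<noteq> {}" by blast
  then have "\<Gamma> \<in> ?h ` spectrum M" unfolding \<Gamma>_def using fin by (intro Max_in) auto
  then obtain \<mu>0 where \<mu>0: "\<mu>0 \<in> spectrum M" and \<Gamma>\<mu>0: "\<Gamma> = ?h \<mu>0" by blast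
  note h\<mu>0 = resolvent_ratio_bounds[OF \<alpha> pos[OF \<mu>0]]
  show "0 < \<Gamma>" "\<Gamma> < 1" "1/2 \<le> \<Gamma>^2" unfolding \<Gamma>\<mu>0 by (fact h\<mu>0(1), fact h\<mu>0(2), fact h\<mu>0(3))
  show "\<alpha>^2 + \<mu>^2 \<le> \<Gamma>^2 * (\<alpha> + \<mu>)^2" if "eigenvalue (e \<cdot>\<^sub>m M) \<mu>" for \<mu>
  proof -
    from eigenvalue_smult_mat[OF Mf(1) _ that] e have sp: "\<mu> / e \<in> spectrum M"
      unfolding spectrum_def by simp
    have em: "e * (\<mu> / e) = \<mu>" using e by simp
    have "?h (\<mu> / e) \<in> ?h ` spectrum M" using sp by (rule imageI)
    then have "?h (\<mu> / e) \<le> \<Gamma>" unfolding \<Gamma>_def by (rule Max_ge[OF finite_imageI[OF fin]])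
    then have "(?h (\<mu> / e))^2 \<le> \<Gamma>^2"
      by (rule power_mono) (rule less_imp_le[OF resolvent_ratio_bounds(1)[OF \<alpha> pos[OF sp]]])
    then have "(\<alpha>^2 + \<mu>^2) / (\<alpha> + \<mu>)^2 \<le> \<Gamma>^2" unfolding em by (simp add: power_divide)
    moreover have "0 < \<alpha> + \<mu>" using pos[OF sp] \<alpha> unfolding em by simp
    ultimately show ?thesis by (simp add: divide_le_eq)
  qed
qed

lemma shift_psd_inverse:
  assumes P: "(P :: real mat) \<in> carrier_mat n n"
    and psd: "\<And>x. x \<in> carrier_vec n \<Longrightarrow> 0 \<le> x \<bullet> (P *\<^sub>v x)" and \<alpha>: "0 < \<alpha>"
  defines "A \<equiv> \<alpha> \<cdot>\<^sub>m 1\<^sub>m n + P"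
  shows "A * minv A = 1\<^sub>m n" and "minv A * A = 1\<^sub>m n" and "minv A \<in> carrier_mat n n"
proof -
  have A: "A \<in> carrier_mat n n" unfolding A_def using P by simp
  have "v = 0\<^sub>v n" if v: "v \<in> carrier_vec n" and "A *\<^sub>v v = 0\<^sub>v n" for v
  proof -
    have "\<alpha> * (v \<bullet> v) + v \<bullet> (P *\<^sub>v v) = v \<bullet> (A *\<^sub>v v)"
      unfolding A_def using P v by (simp add: add_smult_one_mult_mat_vec scalar_prod_add_distrib[of v n])
    also have "\<dots> = 0" using that v by simp
    finally have "\<alpha> * (v \<bullet> v) \<le> 0" using psd[OF v] by linarith
    then have "v \<bullet> v = 0" using \<alpha> scalar_prod_self_nonneg[of v] by (simp add: mult_le_0_iff)
    then show ?thesis using v by (simp add: scalar_prod_self_eq_0_iff)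
  qed
  then have "det A \<noteq> 0" using det_0_iff_vec_prod_zero_field[OF A] by auto
  then have U: "A \<in> Units (ring_mat TYPE(real) n ())" by (rule det_non_zero_imp_unit[OF A])
  obtain B where B: "mat_inverse A = Some B"
    using mat_inverse(1)[OF A, of "()"] U by (cases "mat_inverse A") auto
  from mat_inverse(2)[OF A B] B
  show "A * minv A = 1\<^sub>m n" "minv A * A = 1\<^sub>m n" "minv A \<in> carrier_mat n n"
    unfolding minv_def by auto
qed

lemma weighted_contraction_of_factors:
  assumes A: "A \<in> carrier_mat n n" and B: "B \<in> carrier_mat n n"
    and C: "C \<in> carrier_mat n n" and D: "D \<in> carrier_mat n n"
    and Ainv: "A * minv A = 1\<^sub>m n" "minv A \<in> carrier_mat n n"
    and Cinv: "C * minv C = 1\<^sub>m n" "minv C \<in> carrier_mat n n"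
    and BC: "\<And>u. u \<in> carrier_vec n \<Longrightarrow> (B *\<^sub>v u) \<bullet> (B *\<^sub>v u) \<le> g1^2 * ((C *\<^sub>v u) \<bullet> (C *\<^sub>v u))"
    and DA: "\<And>z. z \<in> carrier_vec n \<Longrightarrow> (D *\<^sub>v z) \<bullet> (D *\<^sub>v z) \<le> g2^2 * ((A *\<^sub>v z) \<bullet> (A *\<^sub>v z))"
    and g: "0 \<le> g1" "0 \<le> g2" and z: "z \<in> carrier_vec n"
  shows "vec_norm (A *\<^sub>v ((minv A * B * minv C * D) *\<^sub>v z)) \<le> g1 * g2 * vec_norm (A *\<^sub>v z)"
proof -
  have Dz: "D *\<^sub>v z \<in> carrier_vec n" using D z by simp
  define u where "u = minv C *\<^sub>v (D *\<^sub>v z)"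
  have u: "u \<in> carrier_vec n" unfolding u_def using Cinv(2) Dz by simp
  have Cu: "C *\<^sub>v u = D *\<^sub>v z"
    unfolding u_def using assoc_mult_mat_vec[OF C Cinv(2) Dz] Cinv(1) Dz by simp
  have Bu: "B *\<^sub>v u \<in> carrier_vec n" using B u by simp
  have "(minv A * B * minv C * D) *\<^sub>v z = minv A *\<^sub>v (B *\<^sub>v u)"
    unfolding u_def using Ainv(2) B Cinv(2) D z by (simp add: assoc_mult_mat_vec[of _ n n _ n])
  then have ATz: "A *\<^sub>v ((minv A * B * minv C * D) *\<^sub>v z) = B *\<^sub>v u"
    using assoc_mult_mat_vec[OF A Ainv(2) Bu] Ainv(1) Bu by simp
  have "vec_norm (B *\<^sub>v u)^2 \<le> (g1 * g2 * vec_norm (A *\<^sub>v z))^2"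
  proof -
    have "vec_norm (B *\<^sub>v u)^2 \<le> g1^2 * ((D *\<^sub>v z) \<bullet> (D *\<^sub>v z))"
      unfolding vec_norm_power2 Cu[symmetric] by (rule BC[OF u])
    also have "\<dots> \<le> g1^2 * (g2^2 * ((A *\<^sub>v z) \<bullet> (A *\<^sub>v z)))" by (rule mult_left_mono[OF DA[OF z]]) simp
    finally show ?thesis by (simp add: vec_norm_power2 power_mult_distrib)
  qed
  moreover have "0 \<le> g1 * g2 * vec_norm (A *\<^sub>v z)" using g by (simp add: vec_norm_nonneg)
  ultimately show ?thesis unfolding ATz by (rule power2_le_imp_le)
qed

lemma real_mat_eigenvector_weighted_sq_norm:
  assumes T: "(T :: real mat) \<in> carrier_mat n n" and A: "A \<in> carrier_mat n n"
    and ev: "eigenvector (map_mat complex_of_real T) v z"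
  defines "x \<equiv> map_vec Re v" and "y \<equiv> map_vec Im v"
  shows "(A *\<^sub>v (T *\<^sub>v x)) \<bullet> (A *\<^sub>v (T *\<^sub>v x)) + (A *\<^sub>v (T *\<^sub>v y)) \<bullet> (A *\<^sub>v (T *\<^sub>v y))
    = (cmod z)^2 * ((A *\<^sub>v x) \<bullet> (A *\<^sub>v x) + (A *\<^sub>v y) \<bullet> (A *\<^sub>v y))"
proof -
  have v: "v \<in> carrier_vec n" using ev T unfolding eigenvector_def by auto
  have x: "x \<in> carrier_vec n" and y: "y \<in> carrier_vec n" unfolding x_def y_def using v by auto
  have Ax: "A *\<^sub>v x \<in> carrier_vec n" and Ay: "A *\<^sub>v y \<in> carrier_vec n" using A x y by auto
  note Tx = real_mat_eigenvector_Re_Im(1)[OF T ev, folded x_def y_def]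
  note Ty = real_mat_eigenvector_Re_Im(2)[OF T ev, folded x_def y_def]
  have "Re z \<cdot>\<^sub>v x - Im z \<cdot>\<^sub>v y = Re z \<cdot>\<^sub>v x + (- Im z) \<cdot>\<^sub>v y" using x y by (intro eq_vecI) auto
  then have ATx: "A *\<^sub>v (T *\<^sub>v x) = Re z \<cdot>\<^sub>v (A *\<^sub>v x) + (- Im z) \<cdot>\<^sub>v (A *\<^sub>v y)"
    unfolding Tx using A x y by (simp add: mult_add_distrib_mat_vec[OF A] mult_mat_vec[OF A])
  have ATy: "A *\<^sub>v (T *\<^sub>v y) = Im z \<cdot>\<^sub>v (A *\<^sub>v x) + Re z \<cdot>\<^sub>v (A *\<^sub>v y)"
    unfolding Ty using A x y by (simp add: mult_add_distrib_mat_vec[OF A] mult_mat_vec[OF A])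
  have "(A *\<^sub>v (T *\<^sub>v x)) \<bullet> (A *\<^sub>v (T *\<^sub>v x)) + (A *\<^sub>v (T *\<^sub>v y)) \<bullet> (A *\<^sub>v (T *\<^sub>v y))
    = ((Re z)^2 + (Im z)^2) * ((A *\<^sub>v x) \<bullet> (A *\<^sub>v x) + (A *\<^sub>v y) \<bullet> (A *\<^sub>v y))"
    unfolding ATx ATy scalar_prod_lincomb_self[OF Ax Ay] by (simp add: power2_eq_square algebra_simps)
  then show ?thesis by (simp add: cmod_power2)
qed

lemma sq_norm_mult_pos_of_left_inverse:
  assumes A: "(A :: real mat) \<in> carrier_mat n n" and Ainv: "Ai * A = 1\<^sub>m n" "Ai \<in> carrier_mat n n"
    and w: "w \<in> carrier_vec n" "w \<noteq> 0\<^sub>v n"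
  shows "0 < (A *\<^sub>v w) \<bullet> (A *\<^sub>v w)"
proof -
  have "A *\<^sub>v w \<noteq> 0\<^sub>v n"
  proof
    assume "A *\<^sub>v w = 0\<^sub>v n"
    then have "Ai *\<^sub>v (A *\<^sub>v w) = 0\<^sub>v n" using Ainv(2) by (simp add: mult_mat_vec_zero_vec)
    with assoc_mult_mat_vec[OF Ainv(2) A w(1)] Ainv(1) w show False by simp
  qed
  then show ?thesis
    using scalar_prod_self_nonneg[of "A *\<^sub>v w"] scalar_prod_self_eq_0_iff[of "A *\<^sub>v w" n] A w(1)
    by (simp add: order_less_le)
qed

lemma spectral_radius_le_of_weighted_contraction:
  assumes T: "(T :: real mat) \<in> carrier_mat n n" and A: "A \<in> carrier_mat n n" and n: "0 < n"
    and Ainv: "Ai * A = 1\<^sub>m n" "Ai \<in> carrier_mat n n"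
    and contr: "\<And>z. z \<in> carrier_vec n \<Longrightarrow> vec_norm (A *\<^sub>v (T *\<^sub>v z)) \<le> g * vec_norm (A *\<^sub>v z)"
    and g: "0 \<le> g"
  shows "spectral_radius (map_mat complex_of_real T) \<le> g"
proof -
  let ?N = "\<lambda>w. (A *\<^sub>v w) \<bullet> (A *\<^sub>v w)"
  have "map_mat complex_of_real T \<in> carrier_mat n n" using T by simp
  from spectral_radius_mem_max(1)[OF this n] obtain z
    where "z \<in> spectrum (map_mat complex_of_real T)"
      and rho: "spectral_radius (map_mat complex_of_real T) = cmod z" by blast
  then obtain v where ev: "eigenvector (map_mat complex_of_real T) v z"
    unfolding spectrum_def eigenvalue_def by blast
  then have v: "v \<in> carrier_vec n" using T unfolding eigenvector_def by auto
  define x where "x = map_vec Re v"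
  define y where "y = map_vec Im v"
  have x: "x \<in> carrier_vec n" and y: "y \<in> carrier_vec n" unfolding x_def y_def using v by auto
  have contr2: "?N (T *\<^sub>v w) \<le> g^2 * ?N w" if "w \<in> carrier_vec n" for w
  proof -
    have "vec_norm (A *\<^sub>v (T *\<^sub>v w))^2 \<le> (g * vec_norm (A *\<^sub>v w))^2"
      by (rule power_mono[OF contr[OF that] vec_norm_nonneg])
    then show ?thesis by (simp only: vec_norm_power2 power_mult_distrib)
  qed
  have "x \<noteq> 0\<^sub>v n \<or> y \<noteq> 0\<^sub>v n"
    using real_mat_eigenvector_Re_Im(3)[OF T ev, folded x_def y_def] by auto
  then have pos: "0 < ?N x + ?N y"
    using sq_norm_mult_pos_of_left_inverse[OF A Ainv x] sq_norm_mult_pos_of_left_inverse[OF A Ainv y]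
      scalar_prod_self_nonneg[of "A *\<^sub>v x"] scalar_prod_self_nonneg[of "A *\<^sub>v y"]
    by linarith
  have "(cmod z)^2 * (?N x + ?N y) = ?N (T *\<^sub>v x) + ?N (T *\<^sub>v y)"
    unfolding x_def y_def by (rule real_mat_eigenvector_weighted_sq_norm[OF T A ev, symmetric])
  also have "\<dots> \<le> g^2 * (?N x + ?N y)"
    using contr2[OF x] contr2[OF y] by (simp only: distrib_left add_mono)
  finally have "(cmod z)^2 \<le> g^2" using pos by (simp only: mult_le_cancel_right_pos)
  then show ?thesis unfolding rho using g by (rule power2_le_imp_le)
qed

lemma abs_index_le_weighted_norm:
  assumes A: "(A :: real mat) \<in> carrier_mat n n" and Ainv: "Ai * A = 1\<^sub>m n" "Ai \<in> carrier_mat n n"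
  obtains C where "0 \<le> C" and "\<And>x i. x \<in> carrier_vec n \<Longrightarrow> i < n \<Longrightarrow> \<bar>x $ i\<bar> \<le> C * vec_norm (A *\<^sub>v x)"
proof
  define B where "B = (\<Sum>i<n. \<Sum>j<n. \<bar>Ai $$ (i,j)\<bar>)"
  have B: "\<bar>Ai $$ (i,j)\<bar> \<le> B" if "i < n" "j < n" for i j
  proof -
    have "\<bar>Ai $$ (i,j)\<bar> \<le> (\<Sum>j<n. \<bar>Ai $$ (i,j)\<bar>)" by (rule member_le_sum) (use that in auto)
    also have "\<dots> \<le> B" unfolding B_def by (rule member_le_sum) (use that in \<open>auto intro: sum_nonneg\<close>)
    finally show ?thesis .
  qed
  have B0: "0 \<le> B" unfolding B_def by (auto intro!: sum_nonneg)
  then show "0 \<le> B * real n" by simp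
  fix x :: "real vec" and i assume x: "x \<in> carrier_vec n" and i: "i < n"
  have Ax: "A *\<^sub>v x \<in> carrier_vec n" using A x by simp
  have "Ai *\<^sub>v (A *\<^sub>v x) = x" using assoc_mult_mat_vec[OF Ainv(2) A x] Ainv x by simp
  then have "\<bar>x $ i\<bar> \<le> B * (\<Sum>j<n. \<bar>(A *\<^sub>v x) $ j\<bar>)"
    using abs_mult_mat_vec_index_le[OF Ainv(2) B Ax i] by simp
  also have "\<dots> \<le> B * (\<Sum>j<n. vec_norm (A *\<^sub>v x))"
    using A by (intro mult_left_mono[OF sum_mono B0] abs_index_le_vec_norm) auto
  finally show "\<bar>x $ i\<bar> \<le> B * real n * vec_norm (A *\<^sub>v x)" by simp
qed

lemma weighted_norm_funpow_le:
  assumes T: "T \<in> carrier_mat n n" and A: "A \<in> carrier_mat n n"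
    and contr: "\<And>z. z \<in> carrier_vec n \<Longrightarrow> vec_norm (A *\<^sub>v (T *\<^sub>v z)) \<le> g * vec_norm (A *\<^sub>v z)"
    and g: "0 \<le> g" and z: "z \<in> carrier_vec n"
  shows "((\<lambda>x. T *\<^sub>v x) ^^ k) z \<in> carrier_vec n"
    and "vec_norm (A *\<^sub>v ((\<lambda>x. T *\<^sub>v x) ^^ k) z) \<le> g^k * vec_norm (A *\<^sub>v z)"
proof -
  show zk: "((\<lambda>x. T *\<^sub>v x) ^^ k) z \<in> carrier_vec n" for k by (induct k) (use T z in auto)
  show "vec_norm (A *\<^sub>v ((\<lambda>x. T *\<^sub>v x) ^^ k) z) \<le> g^k * vec_norm (A *\<^sub>v z)"
  proof (induct k)
    case (Suc k)
    have "vec_norm (A *\<^sub>v ((\<lambda>x. T *\<^sub>v x) ^^ Suc k) z) \<le> g * vec_norm (A *\<^sub>v ((\<lambda>x. T *\<^sub>v x) ^^ k) z)"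
      using contr[OF zk] by simp
    also have "\<dots> \<le> g * (g^k * vec_norm (A *\<^sub>v z))" by (rule mult_left_mono[OF Suc g])
    finally show ?case by simp
  qed simp
qed

lemma asss_iterates_convergent_of_weighted_contraction:
  assumes T: "(T :: real mat) \<in> carrier_mat n n" and A: "A \<in> carrier_mat n n"
    and Ainv: "Ai * A = 1\<^sub>m n" "Ai \<in> carrier_mat n n"
    and contr: "\<And>z. z \<in> carrier_vec n \<Longrightarrow> vec_norm (A *\<^sub>v (T *\<^sub>v z)) \<le> g * vec_norm (A *\<^sub>v z)"
    and g: "0 \<le> g" "g < 1" and f: "f \<in> carrier_vec n" and x0: "x0 \<in> carrier_vec n" and i: "i < n"
  shows "convergent (\<lambda>k. asss_iterates T f x0 k $ i)"
proof -
  let ?x = "asss_iterates T f x0"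
  obtain C where C: "0 \<le> C" "\<And>x i. x \<in> carrier_vec n \<Longrightarrow> i < n \<Longrightarrow> \<bar>x $ i\<bar> \<le> C * vec_norm (A *\<^sub>v x)"
    using abs_index_le_weighted_norm[OF A Ainv] by blast
  have xS: "?x (Suc k) = T *\<^sub>v ?x k + f" for k unfolding asss_iterates_def by simp
  have xc: "?x k \<in> carrier_vec n" for k by (induct k) (use x0 f T in \<open>auto simp: asss_iterates_def\<close>)
  define d where "d k = ?x (Suc k) - ?x k" for k
  have d0: "d 0 \<in> carrier_vec n" unfolding d_def using xc by simp
  txt \<open>The increments of the iteration are iterates of \<open>T\<close> alone, hence decay geometrically.\<close>
  have dk: "d k = ((\<lambda>x. T *\<^sub>v x) ^^ k) (d 0)" for k
  proof (induct k)
    case (Suc k)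
    have "d (Suc k) = T *\<^sub>v d k"
      unfolding d_def xS[of "Suc k"] xS[of k] using T xc f
      by (simp add: mult_minus_distrib_mat_vec[of _ n n]) (intro eq_vecI; simp)
    then show ?case using Suc by simp
  qed simp
  have "norm (d k $ i) \<le> C * vec_norm (A *\<^sub>v d 0) * g^k" for k
  proof -
    have "norm (d k $ i) \<le> C * vec_norm (A *\<^sub>v d k)"
      unfolding dk[of k] by (simp add: C(2)[OF weighted_norm_funpow_le(1)[OF T A contr g(1) d0] i])
    also have "\<dots> \<le> C * (g^k * vec_norm (A *\<^sub>v d 0))"
      unfolding dk[of k] by (rule mult_left_mono[OF weighted_norm_funpow_le(2)[OF T A contr g(1) d0] C(1)])
    finally show ?thesis by (simp add: ac_simps)
  qed
  then have "summable (\<lambda>k. d k $ i)"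
    using g by (intro summable_comparison_test[OF _ summable_mult[OF summable_geometric]]) auto
  then have "convergent (\<lambda>k. x0 $ i + (\<Sum>j<k. d j $ i))"
    by (intro convergent_add convergent_const convergentI[OF summable_LIMSEQ])
  moreover have "?x k $ i = x0 $ i + (\<Sum>j<k. d j $ i)" for k
  proof (induct k)
    case (Suc k)
    then show ?case unfolding d_def using xc[of k] xc[of "Suc k"] i by simp
  qed (simp add: asss_iterates_def)
  ultimately show ?thesis by simp
qed

lemma asss_factor_bounds:
  assumes P: "sym_pos_def_mat m P" and m: "0 < m" and \<nu>: "0 < \<nu>" and \<alpha>: "0 < \<alpha>" and e: "0 < e"
  defines "D \<equiv> diag_block_mat [e \<cdot>\<^sub>m P, e \<cdot>\<^sub>m P, e \<cdot>\<^sub>m P, e \<cdot>\<^sub>m P]"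
  defines "A \<equiv> \<alpha> \<cdot>\<^sub>m 1\<^sub>m (4 * m) + D"
    and "g \<equiv> Max ((\<lambda>\<mu>. sqrt (\<alpha>^2 + (e * \<mu>)^2) / (\<alpha> + e * \<mu>)) ` spectrum P)"
  shows "0 < g" and "g < 1" and "D \<in> carrier_mat (4 * m) (4 * m)"
    and "A * minv A = 1\<^sub>m (4 * m)" and "minv A * A = 1\<^sub>m (4 * m)" and "minv A \<in> carrier_mat (4 * m) (4 * m)"
    and "\<And>y. y \<in> carrier_vec (4 * m) \<Longrightarrow>
      ((\<alpha> \<cdot>\<^sub>m 1\<^sub>m (4 * m) + G_mat m \<nu> \<omega> * D) *\<^sub>v y) \<bullet> ((\<alpha> \<cdot>\<^sub>m 1\<^sub>m (4 * m) + G_mat m \<nu> \<omega> * D) *\<^sub>v y)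
      \<le> g^2 * ((A *\<^sub>v y) \<bullet> (A *\<^sub>v y))"
    and "\<And>y. y \<in> carrier_vec (4 * m) \<Longrightarrow>
      ((\<alpha> \<cdot>\<^sub>m 1\<^sub>m (4 * m) - G_mat m \<nu> \<omega> * D) *\<^sub>v y) \<bullet> ((\<alpha> \<cdot>\<^sub>m 1\<^sub>m (4 * m) - G_mat m \<nu> \<omega> * D) *\<^sub>v y)
      \<le> g^2 * ((A *\<^sub>v y) \<bullet> (A *\<^sub>v y))"
proof -
  note Pf = sym_pos_def_matD[OF sym_pos_def_mat_smult[OF P e]]
  note \<Gamma> = spectral_factor_bounds[OF P m \<alpha> e, folded g_def]
  show "0 < g" "g < 1" by (fact \<Gamma>(1), fact \<Gamma>(2))
  show D: "D \<in> carrier_mat (4 * m) (4 * m)" unfolding D_def by (rule diag_block_mat_4_carrier[OF Pf(1)])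
  have "0 \<le> y \<bullet> (D *\<^sub>v y)" if "y \<in> carrier_vec (4 * m)" for y
    unfolding D_def by (rule diag_block_mat_4_psd[OF Pf(1) _ that]) (rule Pf(3))
  from shift_psd_inverse[OF D this \<alpha>]
  show "A * minv A = 1\<^sub>m (4 * m)" "minv A * A = 1\<^sub>m (4 * m)" "minv A \<in> carrier_mat (4 * m) (4 * m)"
    unfolding A_def by simp_all
  have g2: "g^2 < 1" using \<Gamma>(1,2) by (simp add: power_less_one_iff)
  show "((\<alpha> \<cdot>\<^sub>m 1\<^sub>m (4 * m) + G_mat m \<nu> \<omega> * D) *\<^sub>v y) \<bullet> ((\<alpha> \<cdot>\<^sub>m 1\<^sub>m (4 * m) + G_mat m \<nu> \<omega> * D) *\<^sub>v y)
      \<le> g^2 * ((A *\<^sub>v y) \<bullet> (A *\<^sub>v y))" if "y \<in> carrier_vec (4 * m)" for y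
    unfolding A_def D_def
    by (rule G_mat_factor_sq_norm_bounds(1)[OF Pf(1,2) m \<nu> \<alpha> \<Gamma>(3) g2 _ that]) (rule \<Gamma>(4))
  show "((\<alpha> \<cdot>\<^sub>m 1\<^sub>m (4 * m) - G_mat m \<nu> \<omega> * D) *\<^sub>v y) \<bullet> ((\<alpha> \<cdot>\<^sub>m 1\<^sub>m (4 * m) - G_mat m \<nu> \<omega> * D) *\<^sub>v y)
      \<le> g^2 * ((A *\<^sub>v y) \<bullet> (A *\<^sub>v y))" if "y \<in> carrier_vec (4 * m)" for y
    unfolding A_def D_def
    by (rule G_mat_factor_sq_norm_bounds(2)[OF Pf(1,2) m \<nu> \<alpha> \<Gamma>(3) g2 _ that]) (rule \<Gamma>(4))
qed

lemma factored_iteration_bounds: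
  assumes A: "A \<in> carrier_mat n n" and B: "B \<in> carrier_mat n n"
    and C: "C \<in> carrier_mat n n" and D: "D \<in> carrier_mat n n" and n: "0 < n"
    and Ainv: "A * minv A = 1\<^sub>m n" "minv A * A = 1\<^sub>m n" "minv A \<in> carrier_mat n n"
    and Cinv: "C * minv C = 1\<^sub>m n" "minv C \<in> carrier_mat n n"
    and BC: "\<And>u. u \<in> carrier_vec n \<Longrightarrow> (B *\<^sub>v u) \<bullet> (B *\<^sub>v u) \<le> g1^2 * ((C *\<^sub>v u) \<bullet> (C *\<^sub>v u))"
    and DA: "\<And>z. z \<in> carrier_vec n \<Longrightarrow> (D *\<^sub>v z) \<bullet> (D *\<^sub>v z) \<le> g2^2 * ((A *\<^sub>v z) \<bullet> (A *\<^sub>v z))"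
    and g: "0 \<le> g1" "0 \<le> g2" "g1 * g2 < 1"
  defines "T \<equiv> minv A * B * minv C * D"
  shows "spectral_radius (map_mat complex_of_real T) \<le> g1 * g2"
    and "f \<in> carrier_vec n \<Longrightarrow> x0 \<in> carrier_vec n \<Longrightarrow> i < n \<Longrightarrow>
      convergent (\<lambda>k. asss_iterates T f x0 k $ i)"
proof -
  have T: "T \<in> carrier_mat n n"
    unfolding T_def using Ainv(3) B Cinv(2) D by (intro mult_carrier_mat) auto
  have contr: "vec_norm (A *\<^sub>v (T *\<^sub>v z)) \<le> g1 * g2 * vec_norm (A *\<^sub>v z)" if "z \<in> carrier_vec n" for z
    unfolding T_def by (rule weighted_contraction_of_factors[OF A B C D Ainv(1,3) Cinv BC DA g(1,2) that])
  have g0: "0 \<le> g1 * g2" using g by simp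
  show "spectral_radius (map_mat complex_of_real T) \<le> g1 * g2"
    by (rule spectral_radius_le_of_weighted_contraction[OF T A n Ainv(2,3) contr g0])
  show "convergent (\<lambda>k. asss_iterates T f x0 k $ i)"
    if "f \<in> carrier_vec n" "x0 \<in> carrier_vec n" "i < n"
    by (rule asss_iterates_convergent_of_weighted_contraction[OF T A Ainv(2,3) contr g0 g(3) that])
qed

theorem theorem1:
  fixes m :: nat and M K :: "real mat" and \<nu> \<omega> \<alpha> :: real
  assumes m: "0 < m"
    and M: "sym_pos_def_mat m M" and K: "sym_pos_def_mat m K"
    and nu: "\<nu> > 0" and alpha: "\<alpha> > 0"
  defines "\<eta> \<equiv> sqrt \<nu> / sqrt (1 + \<nu> * \<omega>^2)"
  defines "\<M> \<equiv> diag_block_mat [M, M, M, M]"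
    and "\<K> \<equiv> \<eta> \<cdot>\<^sub>m diag_block_mat [K, K, K, K]"
    and "\<G> \<equiv> G_mat m \<nu> \<omega>"
    and "Imat \<equiv> (1\<^sub>m (4 * m) :: real mat)"
  defines "T \<equiv> minv (\<alpha> \<cdot>\<^sub>m Imat + \<K>) * (\<alpha> \<cdot>\<^sub>m Imat + \<G> * \<M>)
                 * minv (\<alpha> \<cdot>\<^sub>m Imat + \<M>) * (\<alpha> \<cdot>\<^sub>m Imat - \<G> * \<K>)"
    and "\<gamma> \<equiv> Max ((\<lambda>\<mu>. sqrt (\<alpha>^2 + \<mu>^2) / (\<alpha> + \<mu>)) ` spectrum M)
             * Max ((\<lambda>l. sqrt (\<alpha>^2 + (\<eta> * l)^2) / (\<alpha> + \<eta> * l)) ` spectrum K)"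
  shows "spectral_radius (map_mat complex_of_real T) \<le> \<gamma> \<and> \<gamma> < 1 \<and>
    (\<forall>b \<in> carrier_vec (4 * m). \<forall>x0 \<in> carrier_vec (4 * m).
       let f = \<alpha> \<cdot>\<^sub>v ((minv (\<alpha> \<cdot>\<^sub>m Imat + \<K>) * (Imat - \<G>) * minv (\<alpha> \<cdot>\<^sub>m Imat + \<M>)) *\<^sub>v b)
       in \<forall>i < 4 * m. convergent (\<lambda>k. asss_iterates T f x0 k $ i))"
proof -
  have eta: "0 < \<eta>" unfolding \<eta>_def using nu by (simp add: add_pos_nonneg)
  have M_diag: "\<M> = diag_block_mat [1 \<cdot>\<^sub>m M, 1 \<cdot>\<^sub>m M, 1 \<cdot>\<^sub>m M, 1 \<cdot>\<^sub>m M]" unfolding \<M>_def smult_one_mat ..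
  have K_diag: "\<K> = diag_block_mat [\<eta> \<cdot>\<^sub>m K, \<eta> \<cdot>\<^sub>m K, \<eta> \<cdot>\<^sub>m K, \<eta> \<cdot>\<^sub>m K]"
    unfolding \<K>_def by (rule smult_diag_block_mat_4[OF sym_pos_def_matD(1)[OF K]])
  define \<gamma>M where "\<gamma>M = Max ((\<lambda>\<mu>. sqrt (\<alpha>^2 + (1 * \<mu>)^2) / (\<alpha> + 1 * \<mu>)) ` spectrum M)"
  define \<gamma>K where "\<gamma>K = Max ((\<lambda>l. sqrt (\<alpha>^2 + (\<eta> * l)^2) / (\<alpha> + \<eta> * l)) ` spectrum K)"
  have one: "(0 :: real) < 1" by simp
  note FM = asss_factor_bounds[OF M m nu alpha one, folded M_diag \<gamma>M_def]
  note FK = asss_factor_bounds[OF K m nu alpha eta, folded K_diag \<gamma>K_def]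
  let ?A = "\<alpha> \<cdot>\<^sub>m 1\<^sub>m (4 * m) + \<K>" and ?B = "\<alpha> \<cdot>\<^sub>m 1\<^sub>m (4 * m) + \<G> * \<M>"
    and ?C = "\<alpha> \<cdot>\<^sub>m 1\<^sub>m (4 * m) + \<M>" and ?D = "\<alpha> \<cdot>\<^sub>m 1\<^sub>m (4 * m) - \<G> * \<K>"
  have carriers: "?A \<in> carrier_mat (4 * m) (4 * m)" "?B \<in> carrier_mat (4 * m) (4 * m)"
    "?C \<in> carrier_mat (4 * m) (4 * m)" "?D \<in> carrier_mat (4 * m) (4 * m)"
    "1\<^sub>m (4 * m) - \<G> \<in> carrier_mat (4 * m) (4 * m)"
    unfolding \<G>_def using FM(3) FK(3) mult_carrier_mat[OF G_mat_carrier FM(3)] mult_carrier_mat[OF G_mat_carrier FK(3)]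
    by (auto intro!: minus_carrier_mat)
  have \<gamma>: "\<gamma> = \<gamma>M * \<gamma>K" unfolding \<gamma>_def \<gamma>M_def \<gamma>K_def by simp
  have "\<gamma>M * \<gamma>K < 1" using FM(1,2) FK(1,2) mult_strict_mono[of \<gamma>M 1 \<gamma>K 1] by simp
  note iteration = factored_iteration_bounds[OF carriers(1-4) _ FK(4-6) FM(4,6) _ _ _ _ this,
      folded T_def[unfolded Imat_def] \<gamma>]
  show ?thesis unfolding Imat_def Let_def
  proof (intro conjI ballI allI impI)
    show "spectral_radius (map_mat complex_of_real T) \<le> \<gamma>"
      by (rule iteration(1)) (use m FM FK in \<open>simp_all add: \<G>_def less_imp_le\<close>)
    fix b x0 :: "real vec" and i assume "b \<in> carrier_vec (4 * m)" "x0 \<in> carrier_vec (4 * m)" "i < 4 * m"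
    with mult_carrier_mat[OF mult_carrier_mat[OF FK(6) carriers(5)] FM(6)] show "convergent (\<lambda>k. asss_iterates T (\<alpha> \<cdot>\<^sub>v ((minv ?A * (1\<^sub>m (4 * m) - \<G>) * minv ?C) *\<^sub>v b)) x0 k $ i)"
      by (intro iteration(2)) (use m FM FK in \<open>simp_all add: \<G>_def less_imp_le\<close>)
  qed (use \<gamma> \<open>\<gamma>M * \<gamma>K < 1\<close> in simp)
qed

end
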